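(* Let $\mathfrak G=\{G^s:s>0\}$ with $G^s_k=(k!)^s$. Neither $\mathcal E^{(\mathfrak G)}(\mathbb R)$ nor $\mathcal E^{\{\mathfrak G\}}(\mathbb R)$ coincides (as a vector space) with any of $\mathcal E^{(M)}(\mathbb R)$, $\mathcal E^{\{M\}}(\mathbb R)$, $\mathcal E^{(\omega)}(\mathbb R)$, $\mathcal E^{\{\omega\}}(\mathbb R)$, for any sequence $M\in\mathbb R_{>0}^{\mathbb N}$ or any weight function $\omega\in\mathscr W$.
   Context: For $M\in\mathbb R_{>0}^{\mathbb N}$, compact $K\subseteq\mathbb R$, $\rho>0$: $\|f\|^M_{K,\rho}:=\sup\{|f^{(k)}(x)|/(k!\rho^kM_k):x\in K,k\in\mathbb N\}$; $\mathcal E^{(M)}(\mathbb R)$ = smooth $f$ with $\|f\|^M_{K,\rho}<\infty$ for all compact $K$, all $\rho>0$; $\mathcal E^{\{M\}}(\mathbb R)$ = smooth $f$ such that for every compact $K$ there is $\rho$ with $\|f\|^M_{K,\rho}<\infty$; $\mathcal E^{\{M\}}(K)$ = smooth functions on $K$ with some finite $\|f\|^M_{K,\rho}$. $\mathcal E^{(\mathfrak G)}(\mathbb R):=\bigcap_{s>0}\mathcal E^{(G^s)}(\mathbb R)$ and $\mathcal E^{\{\mathfrak G\}}(\mathbb R):=\bigcap_{K}\bigcup_{s>0}\mathcal E^{\{G^s\}}(K)$ (smooth $f$ whose restriction to each compact $K$ lies in some $\mathcal E^{\{G^s\}}(K)$). $\mathscr W$: continuous increasing $\omega:[0,\infty)\to[0,\infty)$,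 $\omega|_{[0,1]}=0$, $\omega\to\infty$, $\omega(2t)=O(\omega(t))$, $\log t=o(\omega(t))$, $t\mapsto\varphi(t):=\omega(e^t)$ convex on $[0,\infty)$; $\varphi^*(t):=\sup_{s\ge0}(st-\varphi(s))$. $\mathcal E^{(\omega)}(\mathbb R)$ / $\mathcal E^{\{\omega\}}(\mathbb R)$: smooth $f$ with $\sup_{x\in K,k}|f^{(k)}(x)|\exp(-\frac1\rho\varphi^*(\rho k))<\infty$ for all compact $K$ and all $\rho>0$ / for all $K$ and some $\rho>0$. *)

theory Defs
  imports "HOL-Analysis.Analysis" "HOL-Library.Landau_Symbols"
begin

definition kderiv :: "nat \<Rightarrow> (real \<Rightarrow> real) \<Rightarrow> real \<Rightarrow> real" where
  "kderiv k f = (deriv ^^ k) f"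

definition smooth :: "(real \<Rightarrow> real) \<Rightarrow> bool" where
  "smooth f \<longleftrightarrow> (\<forall>k x. kderiv k f differentiable (at x))"

definition normM_finite :: "(nat \<Rightarrow> real) \<Rightarrow> real set \<Rightarrow> real \<Rightarrow> (real \<Rightarrow> real) \<Rightarrow> bool" where
  "normM_finite M K \<rho> f \<longleftrightarrow>
     bdd_above {\<bar>kderiv k f x\<bar> / (fact k * \<rho> ^ k * M k) | x k. x \<in> K}"

definition E_beurling :: "(nat \<Rightarrow> real) \<Rightarrow> (real \<Rightarrow> real) set" where
  "E_beurling M = {f. smooth f \<and> (\<forall>K. compact K \<longrightarrow> (\<forall>\<rho>>0. normM_finite M K \<rho> f))}"

definition E_roumieu :: "(nat \<Rightarrow> real) \<Rightarrow> (real \<Rightarrow> real) set" where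
  "E_roumieu M = {f. smooth f \<and> (\<forall>K. compact K \<longrightarrow> (\<exists>\<rho>>0. normM_finite M K \<rho> f))}"

definition gevrey :: "real \<Rightarrow> nat \<Rightarrow> real" where
  "gevrey s k = (fact k) powr s"

definition EG_beurling :: "(real \<Rightarrow> real) set" where
  "EG_beurling = (\<Inter>s\<in>{0<..}. E_beurling (gevrey s))"

definition EG_roumieu :: "(real \<Rightarrow> real) set" where
  "EG_roumieu = {f. smooth f \<and> (\<forall>K. compact K \<longrightarrow>
       (\<exists>s>0. \<exists>\<rho>>0. normM_finite (gevrey s) K \<rho> f))}"

definition weight_fun :: "(real \<Rightarrow> real) \<Rightarrow> bool" where
  "weight_fun \<omega> \<longleftrightarrow>
     continuous_on {0..} \<omega> \<and> mono_on {0..} \<omega> \<and> (\<forall>t\<ge>0. \<omega> t \<ge> 0) \<and>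
     (\<forall>t\<in>{0..1}. \<omega> t = 0) \<and> filterlim \<omega> at_top at_top \<and>
     (\<lambda>t. \<omega> (2 * t)) \<in> O[at_top](\<omega>) \<and>
     (\<lambda>t. ln t) \<in> o[at_top](\<omega>) \<and>
     convex_on {0..} (\<lambda>t. \<omega> (exp t))"

definition young_conj :: "(real \<Rightarrow> real) \<Rightarrow> real \<Rightarrow> real" where
  "young_conj \<omega> t = (SUP s\<in>{0..}. s * t - \<omega> (exp s))"

definition Eomega_finite :: "(real \<Rightarrow> real) \<Rightarrow> real set \<Rightarrow> real \<Rightarrow> (real \<Rightarrow> real) \<Rightarrow> bool" where
  "Eomega_finite \<omega> K \<rho> f \<longleftrightarrow>
     bdd_above {\<bar>kderiv k f x\<bar> * exp (- (1 / \<rho>) * young_conj \<omega> (\<rho> * real k)) | x k. x \<in> K}"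

definition Eomega_beurling :: "(real \<Rightarrow> real) \<Rightarrow> (real \<Rightarrow> real) set" where
  "Eomega_beurling \<omega> = {f. smooth f \<and> (\<forall>K. compact K \<longrightarrow> (\<forall>\<rho>>0. Eomega_finite \<omega> K \<rho> f))}"

definition Eomega_roumieu :: "(real \<Rightarrow> real) \<Rightarrow> (real \<Rightarrow> real) set" where
  "Eomega_roumieu \<omega> = {f. smooth f \<and> (\<forall>K. compact K \<longrightarrow> (\<exists>\<rho>>0. Eomega_finite \<omega> K \<rho> f))}"

end

theory Submission
  imports Defs "HOL-Real_Asymp.Real_Asymp"
begin

text \<open>
  Every class in question is probed with lacunary series
  \<open>f x = (\<Sum>j. c j * (cos (b j * x) + sin (b j * x)))\<close>: the moment \<open>\<Sum>j. c j * b j ^ k\<close> is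
  the absolute value of the \<open>k\<close>-th derivative of \<open>f\<close> at \<open>0\<close> and bounds it everywhere up to a
  factor \<open>2\<close>, so \<open>f\<close> lies in the Beurling or Roumieu class of a weight \<open>W\<close> essentially iff
  \<open>c j * b j ^ k \<le> C * W k\<close>.
  As every Beurling class lies in the Roumieu class of the same weight, it suffices to show
  that no Gevrey class \<open>E\<close> is squeezed between them.

  For a sequence \<open>M\<close>, the Gevrey series with \<open>c j = exp (- exp (j\<^sup>2 - j))\<close> and
  \<open>b j = exp (j\<^sup>2)\<close> forces \<open>m x = (SUP k. x ^ k / (k! * M k))\<close> to be finite. The coefficients
  \<open>2 ^ (-j) / m ((j + 1) * b j)\<close> then give a function of class \<open>(M)\<close>, hence Gevrey, so \<open>m\<close>
  grows faster than \<open>exp (x powr \<sigma>)\<close> for every (Beurling) or some (Roumieu) \<open>\<sigma> < 1\<close>; this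
  growth yields a second lacunary series that is Gevrey but not of class \<open>{M}\<close>. For a weight
  function the coefficients \<open>exp (- (j + 1) * \<omega> (b j) - j)\<close> play the same role, with \<open>\<omega>\<close> in
  place of \<open>ln m\<close>; powers \<open>b ^ k\<close> are compared with the weights
  \<open>exp (\<phi>\<^sup>* (\<rho> * k) / \<rho>)\<close> through the convexity of \<open>\<omega> \<circ> exp\<close> and \<open>\<omega> (2 * t) = O(\<omega> t)\<close>.
\<close>

lemma bounded_if_eventually_bounded:
  fixes f :: "nat \<Rightarrow> real"
  assumes "eventually (\<lambda>j. f j \<le> D) sequentially"
  shows "\<exists>C. \<forall>j. f j \<le> C"
proof -
  obtain J where J: "\<And>j. j \<ge> J \<Longrightarrow> f j \<le> D"
    using assms unfolding eventually_sequentially by blast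
  have "f j \<le> max D (Max (f ` {..<J}))" for j
    using J[of j] Max_ge[of "f ` {..<J}" "f j"] by (cases "j \<ge> J") (auto simp: le_max_iff_disj)
  then show ?thesis by blast
qed

lemma pow_div_fact_le_exp:
  fixes y :: real
  assumes "y \<ge> 0"
  shows "y ^ k / fact k \<le> exp y"
proof -
  have "(\<lambda>n. y ^ n / fact n) sums exp y"
    using exp_converges[of y] by (simp add: divide_inverse ac_simps)
  then show ?thesis
    using sum_le_suminf[OF sums_summable, of _ _ "{k}"] sums_unique assms by fastforce
qed

lemma le_ln_if_exp_le: "exp a \<le> C \<Longrightarrow> a \<le> ln (C::real)"
  using ln_ge_iff[of C a] exp_gt_zero[of a] by linarith

lemma eventually_sequentially_real: "eventually P at_top \<Longrightarrow> eventually (\<lambda>j. P (real j)) sequentially"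
  using filterlim_real_sequentially by (simp add: filterlim_iff)

section \<open>Lacunary series\<close>

text \<open>\<open>cos_sin_shift k\<close> is the \<open>k\<close>-th derivative of \<open>cos + sin\<close>.\<close>

definition cos_sin_shift :: "nat \<Rightarrow> real \<Rightarrow> real" where
  "cos_sin_shift k y = cos (y + real k * pi / 2) + sin (y + real k * pi / 2)"

lemma cos_sin_shift_Suc:
  "cos_sin_shift (Suc k) y = cos (y + real k * pi / 2) - sin (y + real k * pi / 2)"
proof -
  have "y + real (Suc k) * pi / 2 = (y + real k * pi / 2) + pi / 2"
    by (simp add: field_simps)
  then show ?thesis
    unfolding cos_sin_shift_def by (simp only:) (simp add: cos_add sin_add)
qed

lemma has_real_derivative_cos_sin_shift:
  "((\<lambda>x. cos_sin_shift k (b * x)) has_real_derivative b * cos_sin_shift (Suc k) (b * x)) (at x)"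
  unfolding cos_sin_shift_Suc unfolding cos_sin_shift_def
  by (auto intro!: derivative_eq_intros simp: algebra_simps)

lemma abs_cos_sin_shift_le: "\<bar>cos_sin_shift k y\<bar> \<le> 2"
  unfolding cos_sin_shift_def
  using abs_cos_le_one[of "y + real k * pi / 2"] abs_sin_le_one[of "y + real k * pi / 2"]
  by linarith

lemma abs_cos_sin_shift_0: "\<bar>cos_sin_shift k 0\<bar> = 1"
proof -
  define t where "t = real k * pi / 2"
  have "(cos_sin_shift k 0)\<^sup>2 = (sin t)\<^sup>2 + (cos t)\<^sup>2 + sin (2 * t)"
    unfolding cos_sin_shift_def t_def[symmetric] sin_double by (simp add: power2_eq_square algebra_simps)
  also have "\<dots> = 1"
    using sin_npi[of k] by (simp add: t_def)
  finally show ?thesis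
    by (metis abs_power2 power2_eq_1_iff abs_minus_cancel abs_one)
qed

definition lacunary_deriv :: "nat \<Rightarrow> (nat \<Rightarrow> real) \<Rightarrow> (nat \<Rightarrow> real) \<Rightarrow> real \<Rightarrow> real" where
  "lacunary_deriv k c b x = (\<Sum>j. c j * b j ^ k * cos_sin_shift k (b j * x))"

definition lacunary :: "(nat \<Rightarrow> real) \<Rightarrow> (nat \<Rightarrow> real) \<Rightarrow> real \<Rightarrow> real" where
  "lacunary c b = lacunary_deriv 0 c b"

definition lacunary_moment :: "(nat \<Rightarrow> real) \<Rightarrow> (nat \<Rightarrow> real) \<Rightarrow> nat \<Rightarrow> real" where
  "lacunary_moment c b k = (\<Sum>j. c j * b j ^ k)"

definition admissible :: "(nat \<Rightarrow> real) \<Rightarrow> (nat \<Rightarrow> real) \<Rightarrow> bool" where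
  "admissible c b \<longleftrightarrow> (\<forall>j. c j \<ge> 0) \<and> (\<forall>j. b j \<ge> 0) \<and> (\<forall>k. \<exists>C. \<forall>j. c j * b j ^ k \<le> C * (1/2)^j)"

context
  fixes c b :: "nat \<Rightarrow> real"
  assumes adm: "admissible c b"
begin

lemma admissible_nonneg: "c j \<ge> 0" "b j \<ge> 0"
  using adm unfolding admissible_def by auto

lemma summable_lacunary_moment: "summable (\<lambda>j. c j * b j ^ k)"
proof -
  obtain C where C: "\<And>j. c j * b j ^ k \<le> C * (1/2)^j"
    using adm unfolding admissible_def by blast
  show ?thesis
    by (rule summable_comparison_test[of _ "\<lambda>j. C * (1/2)^j"])
       (use C admissible_nonneg in \<open>auto intro!: summable_mult summable_geometric\<close>)
qed

lemma abs_lacunary_term_le: "\<bar>c j * b j ^ k * cos_sin_shift k (b j * x)\<bar> \<le> 2 * (c j * b j ^ k)"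
proof -
  have "c j * b j ^ k \<ge> 0"
    using admissible_nonneg by simp
  from mult_left_mono[OF abs_cos_sin_shift_le this] show ?thesis
    using admissible_nonneg[of j] by (simp add: abs_mult mult.commute)
qed

lemma has_real_derivative_lacunary_deriv:
  "(lacunary_deriv k c b has_real_derivative lacunary_deriv (Suc k) c b x) (at x)"
proof -
  have term_deriv: "((\<lambda>x. c j * b j ^ k * cos_sin_shift k (b j * x)) has_real_derivative
      c j * b j ^ Suc k * cos_sin_shift (Suc k) (b j * x)) (at x)" for j x
    using DERIV_cmult[OF has_real_derivative_cos_sin_shift[of k "b j" x], of "c j * b j ^ k"]
    by (simp add: algebra_simps)
  have "uniformly_convergent_on UNIV
      (\<lambda>n x. \<Sum>j<n. c j * b j ^ Suc k * cos_sin_shift (Suc k) (b j * x))"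
    by (rule Weierstrass_m_test'[OF _ summable_mult[where c=2, OF summable_lacunary_moment[of "Suc k"]]])
       (simp only: real_norm_def abs_lacunary_term_le)
  moreover have "summable (\<lambda>j. c j * b j ^ k * cos_sin_shift k (b j * 0))"
    using summable_lacunary_moment[of k] by (simp add: summable_mult2)
  ultimately show ?thesis
    using has_field_derivative_series'(2)[of UNIV "\<lambda>j x. c j * b j ^ k * cos_sin_shift k (b j * x)"
        "\<lambda>j x. c j * b j ^ Suc k * cos_sin_shift (Suc k) (b j * x)" 0 x] term_deriv
    unfolding lacunary_deriv_def by (simp add: has_field_derivative_at_within)
qed

lemma kderiv_lacunary: "kderiv k (lacunary c b) = lacunary_deriv k c b"
proof (induction k)
  case 0
  then show ?case by (simp add: kderiv_def lacunary_def)
next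
  case (Suc k)
  then have "kderiv (Suc k) (lacunary c b) = deriv (lacunary_deriv k c b)"
    by (simp add: kderiv_def)
  also have "\<dots> = lacunary_deriv (Suc k) c b"
    using DERIV_imp_deriv[OF has_real_derivative_lacunary_deriv] by auto
  finally show ?case .
qed

lemma smooth_lacunary: "smooth (lacunary c b)"
  unfolding smooth_def kderiv_lacunary
  using has_real_derivative_lacunary_deriv real_differentiable_def by blast

lemma abs_lacunary_deriv_le: "\<bar>lacunary_deriv k c b x\<bar> \<le> 2 * lacunary_moment c b k"
proof -
  have summable_2: "summable (\<lambda>j. 2 * (c j * b j ^ k))"
    by (rule summable_mult[OF summable_lacunary_moment])
  have summable_abs: "summable (\<lambda>j. \<bar>c j * b j ^ k * cos_sin_shift k (b j * x)\<bar>)"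
    by (rule summable_comparison_test[OF _ summable_2]) (use abs_lacunary_term_le in auto)
  have "\<bar>lacunary_deriv k c b x\<bar> \<le> (\<Sum>j. 2 * (c j * b j ^ k))"
    unfolding lacunary_deriv_def
    using summable_rabs[OF summable_abs] suminf_le[OF abs_lacunary_term_le summable_abs summable_2]
    by linarith
  also have "\<dots> = 2 * lacunary_moment c b k"
    unfolding lacunary_moment_def using summable_lacunary_moment by (simp add: suminf_mult)
  finally show ?thesis .
qed

lemma abs_lacunary_deriv_0: "\<bar>lacunary_deriv k c b 0\<bar> = lacunary_moment c b k"
proof -
  have "lacunary_deriv k c b 0 = lacunary_moment c b k * cos_sin_shift k 0"
    unfolding lacunary_deriv_def lacunary_moment_def
    using summable_lacunary_moment by (simp add: suminf_mult2)
  moreover have "lacunary_moment c b k \<ge> 0"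
    unfolding lacunary_moment_def using admissible_nonneg
    by (intro suminf_nonneg summable_lacunary_moment) simp
  ultimately show ?thesis by (simp add: abs_mult abs_cos_sin_shift_0)
qed

lemma lacunary_term_le_moment: "c j * b j ^ k \<le> lacunary_moment c b k"
  unfolding lacunary_moment_def
  using sum_le_suminf[OF summable_lacunary_moment, of "{j}"] admissible_nonneg by auto

end

section \<open>Domination of moments and weighted classes\<close>

definition derivs_bdd :: "(nat \<Rightarrow> real) \<Rightarrow> real set \<Rightarrow> (real \<Rightarrow> real) \<Rightarrow> bool" where
  "derivs_bdd W K f \<longleftrightarrow> bdd_above {\<bar>kderiv k f x\<bar> / W k | x k. x \<in> K}"

definition dominated :: "(nat \<Rightarrow> real) \<Rightarrow> (nat \<Rightarrow> real) \<Rightarrow> (nat \<Rightarrow> real) \<Rightarrow> bool" where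
  "dominated c b W \<longleftrightarrow> (\<exists>C. \<forall>j k. c j * b j ^ k \<le> C * W k)"

definition geom_dominated :: "(nat \<Rightarrow> real) \<Rightarrow> (nat \<Rightarrow> real) \<Rightarrow> (nat \<Rightarrow> real) \<Rightarrow> bool" where
  "geom_dominated c b W \<longleftrightarrow> (\<exists>C. \<forall>j k. c j * b j ^ k \<le> C * (1/2)^j * W k)"

lemma admissibleI_geom_dominated:
  assumes "\<And>j. c j \<ge> 0" "\<And>j. b j \<ge> 0" "geom_dominated c b W"
  shows "admissible c b"
proof -
  obtain C where "\<And>j k. c j * b j ^ k \<le> C * (1/2)^j * W k"
    using assms(3) unfolding geom_dominated_def by blast
  then have "\<forall>j. c j * b j ^ k \<le> (C * W k) * (1/2)^j" for k
    by (simp add: ac_simps)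
  then show ?thesis
    using assms(1,2) unfolding admissible_def by blast
qed

lemma derivs_bdd_lacunary:
  assumes adm: "admissible c b" and W: "\<And>k. W k > 0" and "geom_dominated c b W"
  shows "derivs_bdd W K (lacunary c b)"
proof -
  obtain C where "\<And>j k. c j * b j ^ k \<le> C * (1/2)^j * W k"
    using assms(3) unfolding geom_dominated_def by blast
  then have C: "\<And>j k. c j * b j ^ k \<le> C * W k * (1/2)^j"
    by (simp add: ac_simps)
  have "\<bar>kderiv k (lacunary c b) x\<bar> / W k \<le> 4 * C" for k x
  proof -
    have "lacunary_moment c b k \<le> (\<Sum>j. C * W k * (1/2)^j)"
      unfolding lacunary_moment_def
      by (intro suminf_le C summable_lacunary_moment[OF adm] summable_mult summable_geometric) simp
    also have "\<dots> = 2 * C * W k"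
      using suminf_geometric[of "1/2::real"] by (simp add: suminf_mult)
    finally show ?thesis
      using abs_lacunary_deriv_le[OF adm, of k x] W[of k]
      by (simp add: kderiv_lacunary[OF adm] pos_divide_le_eq)
  qed
  then show ?thesis
    unfolding derivs_bdd_def bdd_above_def by blast
qed

lemma dominated_if_derivs_bdd_lacunary:
  assumes adm: "admissible c b" and W: "\<And>k. W k > 0" and "0 \<in> K"
    and "derivs_bdd W K (lacunary c b)"
  shows "dominated c b W"
proof -
  obtain C where C: "\<And>k. \<bar>kderiv k (lacunary c b) 0\<bar> / W k \<le> C"
    using assms(3,4) unfolding derivs_bdd_def bdd_above_def by blast
  have "c j * b j ^ k \<le> C * W k" for j k
    using C[of k] W[of k] lacunary_term_le_moment[OF adm, of j k]
    by (simp add: kderiv_lacunary[OF adm] abs_lacunary_deriv_0[OF adm] pos_divide_le_eq)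
  then show ?thesis
    unfolding dominated_def by blast
qed

lemma geom_dominatedI:
  assumes "\<And>j. c j \<ge> 0" "\<And>k. W k \<ge> 0" and pow_le: "\<And>j k. b j ^ k \<le> H j * W k"
    and "\<And>j. c j * H j \<le> exp (F j)"
    and "eventually (\<lambda>j. F j + real j * ln 2 \<le> 0) sequentially"
  shows "geom_dominated c b W"
proof -
  obtain D where D: "\<And>j. F j + real j * ln 2 \<le> D"
    using bounded_if_eventually_bounded[OF assms(5)] by blast
  have exp_F_le: "exp (F j) \<le> exp D * (1/2)^j" for j
  proof -
    have "exp (F j) \<le> exp (D - real j * ln 2)"
      using D[of j] by simp
    also have "\<dots> = exp D * (1/2)^j"
      by (simp add: exp_diff exp_of_nat_mult power_one_over)
    finally show ?thesis .
  qed
  have "c j * b j ^ k \<le> exp D * (1/2)^j * W k" for j k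
  proof -
    have "c j * b j ^ k \<le> c j * H j * W k"
      using mult_left_mono[OF pow_le[of j k] assms(1)[of j]] by (simp add: mult.assoc)
    also have "\<dots> \<le> exp (F j) * W k"
      using assms(2,4) by (rule mult_right_mono[rotated])
    also have "\<dots> \<le> exp D * (1/2)^j * W k"
      using exp_F_le assms(2) by (rule mult_right_mono)
    finally show ?thesis .
  qed
  then show ?thesis
    unfolding geom_dominated_def by blast
qed

lemma dominatedD:
  assumes "dominated c b W" "\<And>k. W k > 0" "\<And>j. c j \<ge> 0" "\<And>j. \<exists>k. L j * W k \<le> b j ^ k"
  shows "\<exists>C. \<forall>j. c j * L j \<le> C"
proof -
  obtain C where C: "\<And>j k. c j * b j ^ k \<le> C * W k"
    using assms(1) unfolding dominated_def by blast
  have "c j * L j \<le> C" for j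
  proof -
    obtain k where k: "L j * W k \<le> b j ^ k"
      using assms(4) by blast
    have "c j * L j * W k \<le> c j * b j ^ k"
      using mult_left_mono[OF k assms(3)] by (simp add: mult.assoc)
    with C[of j k] assms(2)[of k] show ?thesis
      by (meson mult_le_cancel_right_pos order.trans)
  qed
  then show ?thesis by blast
qed

definition beurling_class :: "'p set \<Rightarrow> ('p \<Rightarrow> nat \<Rightarrow> real) \<Rightarrow> (real \<Rightarrow> real) set" where
  "beurling_class P W = {f. smooth f \<and> (\<forall>K. compact K \<longrightarrow> (\<forall>p\<in>P. derivs_bdd (W p) K f))}"

definition roumieu_class :: "'p set \<Rightarrow> ('p \<Rightarrow> nat \<Rightarrow> real) \<Rightarrow> (real \<Rightarrow> real) set" where
  "roumieu_class P W = {f. smooth f \<and> (\<forall>K. compact K \<longrightarrow> (\<exists>p\<in>P. derivs_bdd (W p) K f))}"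

context
  fixes P :: "'p set" and W :: "'p \<Rightarrow> nat \<Rightarrow> real"
  assumes W_pos: "\<And>p k. p \<in> P \<Longrightarrow> W p k > 0"
begin

lemma lacunary_in_beurling_class:
  assumes "admissible c b" "\<And>p. p \<in> P \<Longrightarrow> geom_dominated c b (W p)"
  shows "lacunary c b \<in> beurling_class P W"
  using assms smooth_lacunary derivs_bdd_lacunary W_pos unfolding beurling_class_def by blast

lemma lacunary_in_roumieu_class:
  assumes "admissible c b" "p \<in> P" "geom_dominated c b (W p)"
  shows "lacunary c b \<in> roumieu_class P W"
  using assms smooth_lacunary derivs_bdd_lacunary W_pos unfolding roumieu_class_def by blast

lemma dominated_if_lacunary_in_beurling_class:
  assumes adm: "admissible c b" and "lacunary c b \<in> beurling_class P W" "p \<in> P"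
  shows "dominated c b (W p)"
proof (rule dominated_if_derivs_bdd_lacunary[OF adm])
  show "derivs_bdd (W p) {0} (lacunary c b)"
    using assms(2,3) unfolding beurling_class_def by auto
qed (use W_pos assms(3) in auto)

lemma dominated_if_lacunary_in_roumieu_class:
  assumes adm: "admissible c b" and "lacunary c b \<in> roumieu_class P W"
  shows "\<exists>p\<in>P. dominated c b (W p)"
proof -
  obtain p where "p \<in> P" "derivs_bdd (W p) {0} (lacunary c b)"
    using assms(2) unfolding roumieu_class_def by (auto dest: spec[of _ "{0}"])
  with dominated_if_derivs_bdd_lacunary[OF adm, of "W p"] W_pos show ?thesis
    by blast
qed

end

definition weight_M :: "(nat \<Rightarrow> real) \<Rightarrow> real \<Rightarrow> nat \<Rightarrow> real" where
  "weight_M M \<rho> k = fact k * \<rho> ^ k * M k"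

definition weight_omega :: "(real \<Rightarrow> real) \<Rightarrow> real \<Rightarrow> nat \<Rightarrow> real" where
  "weight_omega \<omega> \<rho> k = exp ((1/\<rho>) * young_conj \<omega> (\<rho> * real k))"

definition weight_gevrey :: "real \<times> real \<Rightarrow> nat \<Rightarrow> real" where
  "weight_gevrey = (\<lambda>(s, \<rho>). weight_M (gevrey s) \<rho>)"

lemma weight_M_pos: "(\<And>i. M i > 0) \<Longrightarrow> \<rho> > 0 \<Longrightarrow> weight_M M \<rho> k > 0"
  unfolding weight_M_def by simp

lemma weight_gevrey_pos: "p \<in> {0<..} \<times> {0<..} \<Longrightarrow> weight_gevrey p k > 0"
  unfolding weight_gevrey_def gevrey_def by (auto intro: weight_M_pos)

lemma E_beurling_eq: "E_beurling M = beurling_class {0<..} (weight_M M)"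
  unfolding E_beurling_def beurling_class_def normM_finite_def derivs_bdd_def weight_M_def by auto

lemma E_roumieu_eq: "E_roumieu M = roumieu_class {0<..} (weight_M M)"
  unfolding E_roumieu_def roumieu_class_def normM_finite_def derivs_bdd_def weight_M_def by auto

lemma Eomega_finite_eq: "Eomega_finite \<omega> K \<rho> f \<longleftrightarrow> derivs_bdd (weight_omega \<omega> \<rho>) K f"
  unfolding Eomega_finite_def derivs_bdd_def weight_omega_def by (simp add: exp_minus divide_inverse)

lemma Eomega_beurling_eq: "Eomega_beurling \<omega> = beurling_class {0<..} (weight_omega \<omega>)"
  unfolding Eomega_beurling_def beurling_class_def Eomega_finite_eq by auto

lemma Eomega_roumieu_eq: "Eomega_roumieu \<omega> = roumieu_class {0<..} (weight_omega \<omega>)"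
  unfolding Eomega_roumieu_def roumieu_class_def Eomega_finite_eq by auto

lemma EG_beurling_eq: "EG_beurling = beurling_class ({0<..} \<times> {0<..}) weight_gevrey"
proof (intro set_eqI iffI)
  fix f assume "f \<in> EG_beurling"
  then have "f \<in> beurling_class {0<..} (weight_M (gevrey s))" if "s > 0" for s
    using that unfolding EG_beurling_def E_beurling_eq by blast
  then have "smooth f" "\<And>s \<rho> K. s > 0 \<Longrightarrow> \<rho> > 0 \<Longrightarrow> compact K \<Longrightarrow> derivs_bdd (weight_M (gevrey s) \<rho>) K f"
    unfolding beurling_class_def using zero_less_one by blast+
  then show "f \<in> beurling_class ({0<..} \<times> {0<..}) weight_gevrey"
    unfolding beurling_class_def weight_gevrey_def by auto
next
  fix f assume "f \<in> beurling_class ({0<..} \<times> {0<..}) weight_gevrey"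
  then have "f \<in> beurling_class {0<..} (weight_M (gevrey s))" if "s > 0" for s
    using that unfolding beurling_class_def weight_gevrey_def by auto
  then show "f \<in> EG_beurling"
    unfolding EG_beurling_def E_beurling_eq by blast
qed

lemma EG_roumieu_eq: "EG_roumieu = roumieu_class ({0<..} \<times> {0<..}) weight_gevrey"
  unfolding EG_roumieu_def roumieu_class_def weight_gevrey_def
    normM_finite_def derivs_bdd_def weight_M_def
  by (simp add: set_eq_iff Bex_def)

lemma beurling_class_subset_roumieu_class:
  "P \<noteq> {} \<Longrightarrow> beurling_class P W \<subseteq> roumieu_class P W"
  unfolding beurling_class_def roumieu_class_def by blast

lemma E_beurling_subset_E_roumieu: "E_beurling M \<subseteq> E_roumieu M"
  unfolding E_beurling_eq E_roumieu_eq by (rule beurling_class_subset_roumieu_class) auto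

lemma Eomega_beurling_subset_Eomega_roumieu: "Eomega_beurling \<omega> \<subseteq> Eomega_roumieu \<omega>"
  unfolding Eomega_beurling_eq Eomega_roumieu_eq by (rule beurling_class_subset_roumieu_class) auto

lemma lacunary_in_EG_beurling:
  assumes "admissible c b" "\<And>s \<rho>. s > 0 \<Longrightarrow> \<rho> > 0 \<Longrightarrow> geom_dominated c b (weight_gevrey (s, \<rho>))"
  shows "lacunary c b \<in> EG_beurling"
  unfolding EG_beurling_eq
  by (rule lacunary_in_beurling_class) (use assms weight_gevrey_pos in auto)

lemma lacunary_in_EG_roumieu:
  assumes "admissible c b" "s > 0" "\<rho> > 0" "geom_dominated c b (weight_gevrey (s, \<rho>))"
  shows "lacunary c b \<in> EG_roumieu"
  unfolding EG_roumieu_eq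
  by (rule lacunary_in_roumieu_class[where p = "(s, \<rho>)"]) (use assms weight_gevrey_pos in auto)

lemma dominated_if_lacunary_in_EG_beurling:
  assumes "admissible c b" "lacunary c b \<in> EG_beurling" "s > 0" "\<rho> > 0"
  shows "dominated c b (weight_gevrey (s, \<rho>))"
  using dominated_if_lacunary_in_beurling_class[of "{0<..} \<times> {0<..}" weight_gevrey c b "(s, \<rho>)"]
    assms weight_gevrey_pos unfolding EG_beurling_eq by auto

lemma dominated_if_lacunary_in_EG_roumieu:
  assumes "admissible c b" "lacunary c b \<in> EG_roumieu"
  shows "\<exists>s>0. \<exists>\<rho>>0. dominated c b (weight_gevrey (s, \<rho>))"
  using dominated_if_lacunary_in_roumieu_class[OF _ assms(1), of "{0<..} \<times> {0<..}" weight_gevrey]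
    assms(2) weight_gevrey_pos unfolding EG_roumieu_eq by fastforce

lemma lacunary_in_E_beurling:
  assumes "admissible c b" "\<And>k. M k > 0" "\<And>\<rho>. \<rho> > 0 \<Longrightarrow> geom_dominated c b (weight_M M \<rho>)"
  shows "lacunary c b \<in> E_beurling M"
  unfolding E_beurling_eq
  by (rule lacunary_in_beurling_class) (use assms weight_M_pos in auto)

lemma dominated_if_lacunary_in_E_roumieu:
  assumes "admissible c b" "\<And>k. M k > 0" "lacunary c b \<in> E_roumieu M"
  shows "\<exists>\<rho>>0. dominated c b (weight_M M \<rho>)"
  using dominated_if_lacunary_in_roumieu_class[OF _ assms(1), of "{0<..}" "weight_M M"]
    assms weight_M_pos unfolding E_roumieu_eq by fastforce

lemma lacunary_in_Eomega_beurling: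
  assumes "admissible c b" "\<And>\<rho>. \<rho> > 0 \<Longrightarrow> geom_dominated c b (weight_omega \<omega> \<rho>)"
  shows "lacunary c b \<in> Eomega_beurling \<omega>"
  unfolding Eomega_beurling_eq
  by (rule lacunary_in_beurling_class) (use assms in \<open>auto simp: weight_omega_def\<close>)

lemma dominated_if_lacunary_in_Eomega_roumieu:
  assumes "admissible c b" "lacunary c b \<in> Eomega_roumieu \<omega>"
  shows "\<exists>\<rho>>0. dominated c b (weight_omega \<omega> \<rho>)"
  using dominated_if_lacunary_in_roumieu_class[OF _ assms(1), of "{0<..}" "weight_omega \<omega>"]
    assms(2) unfolding Eomega_roumieu_eq weight_omega_def by fastforce

section \<open>Comparing powers with Gevrey weights\<close>

lemma gevrey_weight_ratio:
  assumes "b > 0" "s > 0" "\<rho> > 0"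
  defines "y \<equiv> (b/\<rho>) powr (1/(1+s))"
  shows "(y ^ k / fact k) powr (1+s) = b ^ k / weight_gevrey (s, \<rho>) k"
proof -
  have "y powr (1+s) = b/\<rho>"
    unfolding y_def using assms by (simp add: powr_powr)
  moreover have "(y ^ k) powr (1+s) = (y powr (1+s)) ^ k"
    using assms by (simp add: y_def powr_realpow[symmetric] powr_powr mult.commute)
  ultimately show ?thesis
    unfolding weight_gevrey_def weight_M_def gevrey_def
    by (simp add: powr_divide powr_add power_divide field_simps)
qed

lemma pow_le_exp_mult_weight_gevrey:
  assumes "b \<ge> 0" "s > 0" "\<rho> > 0"
  shows "b ^ k \<le> exp ((1+s) * (b/\<rho>) powr (1/(1+s))) * weight_gevrey (s, \<rho>) k"
proof (cases "b = 0")
  case True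
  then show ?thesis
    using weight_gevrey_pos[of "(s, \<rho>)" k] assms
    by (cases k) (auto simp: weight_gevrey_def weight_M_def gevrey_def)
next
  case False
  define y where "y = (b/\<rho>) powr (1/(1+s))"
  have "b ^ k / weight_gevrey (s, \<rho>) k = (y ^ k / fact k) powr (1+s)"
    using gevrey_weight_ratio[of b s \<rho> k] False assms by (simp add: y_def)
  also have "\<dots> \<le> exp y powr (1+s)"
    using pow_div_fact_le_exp[of y k] assms by (intro powr_mono2) (auto simp: y_def)
  also have "\<dots> = exp ((1+s) * y)"
    by (simp add: powr_def)
  finally show ?thesis
    using weight_gevrey_pos[of "(s, \<rho>)" k] assms by (simp add: y_def pos_divide_le_eq mult.commute)
qed

lemma exists_weight_gevrey_le_pow:
  assumes "b > 0" "s > 0" "\<rho> > 0"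
  shows "\<exists>k. 2 powr ((b/\<rho>) powr (1/(1+s)) / 2 - 1) * weight_gevrey (s, \<rho>) k \<le> b ^ k"
proof -
  define y where "y = (b/\<rho>) powr (1/(1+s))"
  define k where "k = nat \<lfloor>y/2\<rfloor>"
  have "y > 0"
    using assms by (simp add: y_def)
  then have k: "real k \<le> y/2" "y/2 - 1 \<le> real k"
    unfolding k_def by linarith+
  have "2 powr (y/2 - 1) \<le> 2 ^ k"
    using k by (simp add: powr_realpow[symmetric])
  also have "(2::real) ^ k \<le> y ^ k / fact k"
  proof -
    have "2 ^ k * fact k \<le> (2 * real k) ^ k"
      using fact_le_power[of k] by (simp add: power_mult_distrib)
    also have "\<dots> \<le> y ^ k"
      using k by (intro power_mono) auto
    finally show ?thesis by (simp add: field_simps)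
  qed
  also have "\<dots> \<le> (y ^ k / fact k) powr (1+s)"
  proof -
    have "1 \<le> y ^ k / fact k"
      using \<open>2 ^ k \<le> y ^ k / fact k\<close> one_le_power[of "2::real" k] by linarith
    then show ?thesis
      using powr_mono[of 1 "1+s" "y ^ k / fact k"] assms \<open>y > 0\<close> by simp
  qed
  also have "\<dots> = b ^ k / weight_gevrey (s, \<rho>) k"
    using gevrey_weight_ratio[of b s \<rho> k] assms by (simp add: y_def)
  finally show ?thesis
    using weight_gevrey_pos[of "(s, \<rho>)" k] assms by (auto simp: y_def pos_le_divide_eq)
qed

lemma geom_dominated_gevrey:
  assumes "s > 0" "\<rho> > 0" "\<And>j. c j \<ge> 0" "\<And>j. b j \<ge> 0"
    and "\<And>j. c j * exp ((1+s) * (b j/\<rho>) powr (1/(1+s))) \<le> exp (F j)"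
    and "eventually (\<lambda>j. F j + real j * ln 2 \<le> 0) sequentially"
  shows "geom_dominated c b (weight_gevrey (s, \<rho>))"
  by (rule geom_dominatedI[OF assms(3) _ _ assms(5,6)])
     (use assms weight_gevrey_pos[of "(s, \<rho>)"] pow_le_exp_mult_weight_gevrey in \<open>auto simp: less_imp_le\<close>)

lemma dominated_gevreyD:
  assumes "dominated c b (weight_gevrey (s, \<rho>))" "s > 0" "\<rho> > 0" "\<And>j. c j \<ge> 0" "\<And>j. b j > 0"
  shows "\<exists>C. \<forall>j. c j * 2 powr ((b j/\<rho>) powr (1/(1+s)) / 2 - 1) \<le> C"
  by (rule dominatedD[OF assms(1) _ assms(4)])
     (use assms weight_gevrey_pos[of "(s, \<rho>)"] exists_weight_gevrey_le_pow in auto)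

section \<open>Comparing powers with the weights of a weight function\<close>

lemma weight_fun_nonneg: "weight_fun \<omega> \<Longrightarrow> t \<ge> 0 \<Longrightarrow> \<omega> t \<ge> 0"
  unfolding weight_fun_def by auto

lemma weight_fun_mono: "weight_fun \<omega> \<Longrightarrow> 0 \<le> x \<Longrightarrow> x \<le> y \<Longrightarrow> \<omega> x \<le> \<omega> y"
  unfolding weight_fun_def by (auto intro: mono_onD)

lemma weight_fun_ln_le:
  assumes "weight_fun \<omega>" "c > 0"
  shows "\<exists>X\<ge>1. \<forall>x\<ge>X. ln x \<le> c * \<omega> x"
proof -
  have "(\<lambda>t. ln t) \<in> o[at_top](\<omega>)"
    using assms(1) unfolding weight_fun_def by auto
  from landau_o.smallD[OF this assms(2)] obtain X where "\<And>x. x \<ge> X \<Longrightarrow> \<bar>ln x\<bar> \<le> c * \<bar>\<omega> x\<bar>"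
    unfolding eventually_at_top_linorder by auto
  then have "\<forall>x\<ge>max X 1. ln x \<le> c * \<omega> x"
    using weight_fun_nonneg[OF assms(1)] by fastforce
  then show ?thesis
    by (intro exI[of _ "max X 1"]) auto
qed

lemma weight_fun_doubling:
  assumes "weight_fun \<omega>"
  shows "\<exists>L\<ge>1. \<exists>X\<ge>1. \<forall>x\<ge>X. \<omega> (2 * x) \<le> L * \<omega> x"
proof -
  have "(\<lambda>t. \<omega> (2 * t)) \<in> O[at_top](\<omega>)"
    using assms unfolding weight_fun_def by auto
  then obtain c where "eventually (\<lambda>x. norm (\<omega> (2 * x)) \<le> c * norm (\<omega> x)) at_top"
    by (rule landau_o.bigE)
  then obtain X where c: "\<And>x. x \<ge> X \<Longrightarrow> \<bar>\<omega> (2 * x)\<bar> \<le> c * \<bar>\<omega> x\<bar>"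
    unfolding eventually_at_top_linorder by auto
  have "\<omega> (2 * x) \<le> max c 1 * \<omega> x" if "x \<ge> max X 1" for x
  proof -
    have "\<omega> (2 * x) \<le> c * \<omega> x"
      using c[of x] that weight_fun_nonneg[OF assms, of x] weight_fun_nonneg[OF assms, of "2 * x"] by simp
    also have "\<dots> \<le> max c 1 * \<omega> x"
      using that weight_fun_nonneg[OF assms, of x] by (intro mult_right_mono) auto
    finally show ?thesis .
  qed
  then show ?thesis
    by (intro exI[of _ "max c 1"] conjI exI[of _ "max X 1"]) auto
qed

lemma weight_fun_exp_mult_le:
  assumes w: "weight_fun \<omega>"
  shows "\<exists>L\<ge>1. \<exists>X\<ge>1. \<forall>x\<ge>X. \<omega> (exp 1 * x) \<le> L * \<omega> x"
proof -
  obtain L X where L: "L \<ge> 1" and X: "X \<ge> 1" and dbl: "\<And>x. x \<ge> X \<Longrightarrow> \<omega> (2 * x) \<le> L * \<omega> x"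
    using weight_fun_doubling[OF w] by blast
  have "\<omega> (exp 1 * x) \<le> L^2 * \<omega> x" if "x \<ge> X" for x
  proof -
    have "\<omega> (exp 1 * x) \<le> \<omega> (2 * (2 * x))"
      using that X exp_le by (intro weight_fun_mono[OF w]) auto
    also have "\<dots> \<le> L * (L * \<omega> x)"
      using that X L dbl[of x] by (intro order.trans[OF dbl mult_left_mono]) auto
    finally show ?thesis
      by (simp add: power2_eq_square)
  qed
  moreover have "L^2 \<ge> 1"
    using one_le_power[OF L] .
  ultimately show ?thesis
    using X by blast
qed

lemma bdd_above_young_conj:
  assumes "weight_fun \<omega>" "t \<ge> 0"
  shows "bdd_above ((\<lambda>s. s * t - \<omega> (exp s)) ` {0..})"
proof -
  obtain X where X: "X \<ge> 1" "\<And>x. x \<ge> X \<Longrightarrow> ln x \<le> (1/(t+1)) * \<omega> x"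
    using weight_fun_ln_le[OF assms(1), of "1/(t+1)"] assms(2) by auto
  have "s * t - \<omega> (exp s) \<le> ln X * t" if "s \<ge> 0" for s
  proof (cases "exp s \<ge> X")
    case True
    then have "(t+1) * s \<le> \<omega> (exp s)"
      using X(2)[of "exp s"] assms(2) by (simp add: field_simps)
    moreover have "ln X * t \<ge> 0"
      using X(1) assms(2) by simp
    ultimately show ?thesis
      using that by (simp add: algebra_simps)
  next
    case False
    then have "ln (exp s) \<le> ln X"
      using X(1) by (subst ln_le_cancel_iff) auto
    then have "s \<le> ln X"
      by simp
    then show ?thesis
      using assms that weight_fun_nonneg[OF assms(1), of "exp s"] mult_right_mono[of s "ln X" t] by simp
  qed
  then show ?thesis
    unfolding bdd_above_def by blast
qed

lemma le_young_conj:
  assumes "weight_fun \<omega>" "t \<ge> 0" "s \<ge> 0"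
  shows "s * t - \<omega> (exp s) \<le> young_conj \<omega> t"
  unfolding young_conj_def
  by (rule cSUP_upper[OF _ bdd_above_young_conj[OF assms(1,2)]]) (use assms in auto)

lemma young_conj_le:
  assumes "\<And>s. s \<ge> 0 \<Longrightarrow> s * t - \<omega> (exp s) \<le> D"
  shows "young_conj \<omega> t \<le> D"
  unfolding young_conj_def by (rule cSUP_least) (use assms in auto)

lemma young_conj_mono:
  assumes "weight_fun \<omega>" "0 \<le> t1" "t1 \<le> t2"
  shows "young_conj \<omega> t1 \<le> young_conj \<omega> t2"
proof (rule young_conj_le)
  fix s :: real
  assume "s \<ge> 0"
  with assms have "s * t1 \<le> s * t2"
    by (intro mult_left_mono) auto
  with le_young_conj[OF assms(1) _ \<open>s \<ge> 0\<close>, of t2] assms show "s * t1 - \<omega> (exp s) \<le> young_conj \<omega> t2"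
    by linarith
qed

lemma pow_le_exp_mult_weight_omega:
  assumes "weight_fun \<omega>" "b \<ge> 1" "\<rho> > 0"
  shows "b ^ k \<le> exp (\<omega> b / \<rho>) * weight_omega \<omega> \<rho> k"
proof -
  have "ln b * (\<rho> * real k) - \<omega> (exp (ln b)) \<le> young_conj \<omega> (\<rho> * real k)"
    using assms by (intro le_young_conj) auto
  then have "real k * ln b \<le> \<omega> b / \<rho> + (1/\<rho>) * young_conj \<omega> (\<rho> * real k)"
    using assms by (simp add: field_simps)
  then have "exp (real k * ln b) \<le> exp (\<omega> b / \<rho> + (1/\<rho>) * young_conj \<omega> (\<rho> * real k))"
    by simp
  then show ?thesis
    using assms unfolding weight_omega_def by (simp add: exp_add exp_of_nat_mult)
qed

text \<open>
  A convex function lies above the line through the chord over \<open>[u - \<delta>, u]\<close>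
  outside that interval; inside it, monotonicity bounds the defect by \<open>y * \<delta>\<close>.
\<close>
lemma convex_on_chord_support:
  fixes \<phi> :: "real \<Rightarrow> real"
  assumes cvx: "convex_on {0..} \<phi>" and mono: "mono_on {0..} \<phi>"
    and "0 < \<delta>" "\<delta> \<le> u" "s \<ge> 0"
  defines "y \<equiv> (\<phi> u - \<phi> (u - \<delta>)) / \<delta>"
  shows "s * y - \<phi> s \<le> u * y - \<phi> u + y * \<delta>"
proof -
  have "\<phi> (u - \<delta>) \<le> \<phi> u"
    using assms by (intro mono_onD[OF mono]) auto
  then have y_nonneg: "y \<ge> 0"
    using assms by (simp add: y_def)
  consider "u < s" | "u - \<delta> \<le> s" "s \<le> u" | "s < u - \<delta>"
    by linarith
  then show ?thesis
  proof cases
    case 1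
    have "(\<phi> (u - \<delta>) - \<phi> u) / ((u - \<delta>) - u) \<le> (\<phi> u - \<phi> s) / (u - s)"
      using order.trans[OF convex_on_slope_le[OF cvx, of "u - \<delta>" s u]] 1 assms by auto
    then have "y * (s - u) \<le> \<phi> s - \<phi> u"
      using 1 assms by (simp add: y_def field_simps)
    moreover have "y * \<delta> \<ge> 0"
      using y_nonneg \<open>0 < \<delta>\<close> by simp
    ultimately show ?thesis
      by (simp add: algebra_simps)
  next
    case 2
    have "\<phi> (u - \<delta>) \<le> \<phi> s"
      using 2 assms by (intro mono_onD[OF mono]) auto
    moreover have "s * y \<le> u * y"
      using 2 y_nonneg by (intro mult_right_mono) auto
    ultimately show ?thesis
      using assms by (simp add: y_def)
  next
    case 3
    have "(\<phi> s - \<phi> u) / (s - u) \<le> (\<phi> (u - \<delta>) - \<phi> u) / ((u - \<delta>) - u)"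
      using convex_on_slope_le(2)[OF cvx, of s u "u - \<delta>"] 3 assms by auto
    then have "\<phi> u - \<phi> s \<le> y * (u - s)"
      using 3 assms by (simp add: y_def field_simps)
    moreover have "y * \<delta> \<ge> 0"
      using y_nonneg \<open>0 < \<delta>\<close> by simp
    ultimately show ?thesis
      by (simp add: algebra_simps)
  qed
qed

text \<open>
  The doubling condition bounds the slope of \<open>t \<mapsto> \<omega> (exp t)\<close> just below \<open>ln b\<close> by a
  multiple of \<open>\<omega> b\<close>, so the chord support above loses at most a quarter of \<open>\<omega> b\<close>.
\<close>
lemma young_conj_le_at_ln:
  assumes w: "weight_fun \<omega>"
  shows "\<exists>B. \<forall>b\<ge>B. \<exists>y\<ge>0. young_conj \<omega> y \<le> ln b * y - 3/4 * \<omega> b"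
proof -
  obtain L X where L: "L \<ge> 1" and X: "X \<ge> 1" and exp_mult: "\<And>x. x \<ge> X \<Longrightarrow> \<omega> (exp 1 * x) \<le> L * \<omega> x"
    using weight_fun_exp_mult_le[OF w] by blast
  define \<phi> where "\<phi> t = \<omega> (exp t)" for t
  have cvx: "convex_on {0..} \<phi>" and mono: "mono_on {0..} \<phi>"
    using w unfolding weight_fun_def \<phi>_def by (auto intro!: mono_onI weight_fun_mono[OF w])
  define \<delta> where "\<delta> = 1 / (4 * L)"
  have \<delta>: "\<delta> > 0" "\<delta> \<le> 1"
    using L unfolding \<delta>_def by (auto simp: divide_le_eq)
  have "\<exists>y\<ge>0. young_conj \<omega> y \<le> ln b * y - 3/4 * \<omega> b" if b: "b \<ge> max X (exp 1)" for b
  proof -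
    define u where "u = ln b"
    have "b > 0" "u \<ge> 1" and \<phi>_u: "\<phi> u = \<omega> b"
      using b X by (auto simp: u_def \<phi>_def ln_ge_iff)
    then have \<phi>_u1: "\<phi> (u + 1) \<le> L * \<phi> u"
      using exp_mult[of b] b by (simp add: \<phi>_def u_def exp_add mult.commute)
    define y where "y = (\<phi> u - \<phi> (u - \<delta>)) / \<delta>"
    have "(\<phi> (u - \<delta>) - \<phi> u) / ((u - \<delta>) - u) \<le> (\<phi> u - \<phi> (u + 1)) / (u - (u + 1))"
      using order.trans[OF convex_on_slope_le[OF cvx, of "u - \<delta>" "u + 1" u]] \<delta> \<open>u \<ge> 1\<close> by auto
    then have "y * \<delta> \<le> (\<phi> (u + 1) - \<phi> u) * \<delta>"
      using \<delta> by (intro mult_right_mono) (auto simp: y_def field_simps)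
    also have "\<dots> \<le> L * \<phi> u * \<delta>"
      using \<phi>_u1 \<delta> weight_fun_nonneg[OF w, of b] \<phi>_u \<open>b > 0\<close> by (intro mult_right_mono) auto
    also have "\<dots> = \<phi> u / 4"
      using L by (simp add: \<delta>_def)
    finally have "y * \<delta> \<le> \<phi> u / 4" .
    moreover have "s * y - \<phi> s \<le> u * y - \<phi> u + y * \<delta>" if "s \<ge> 0" for s
      unfolding y_def using convex_on_chord_support[OF cvx mono \<delta>(1)] \<delta> \<open>u \<ge> 1\<close> that by simp
    ultimately have "young_conj \<omega> y \<le> u * y - 3/4 * \<phi> u"
      by (intro young_conj_le) (fastforce simp: \<phi>_def)
    moreover have "y \<ge> 0"
      using mono_onD[OF mono, of "u - \<delta>" u] \<delta> \<open>u \<ge> 1\<close> by (simp add: y_def)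
    ultimately show ?thesis
      using \<phi>_u u_def by auto
  qed
  then show ?thesis by blast
qed

lemma exists_weight_omega_le_pow:
  assumes w: "weight_fun \<omega>" and "\<rho> > 0"
  shows "\<exists>B. \<forall>b\<ge>B. \<exists>k. exp (3/4 * \<omega> b / \<rho> - ln b) * weight_omega \<omega> \<rho> k \<le> b ^ k"
proof -
  obtain B where B: "\<And>b. b \<ge> B \<Longrightarrow> \<exists>y\<ge>0. young_conj \<omega> y \<le> ln b * y - 3/4 * \<omega> b"
    using young_conj_le_at_ln[OF w] by blast
  have "\<exists>k. exp (3/4 * \<omega> b / \<rho> - ln b) * weight_omega \<omega> \<rho> k \<le> b ^ k" if b: "b \<ge> max B 1" for b
  proof -
    obtain y where "y \<ge> 0" and y: "young_conj \<omega> y \<le> ln b * y - 3/4 * \<omega> b"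
      using B[of b] b by auto
    define k where "k = nat \<lfloor>y / \<rho>\<rfloor>"
    have "y / \<rho> \<ge> 0"
      using \<open>y \<ge> 0\<close> \<open>\<rho> > 0\<close> by simp
    then have "real k \<le> y / \<rho>" "y / \<rho> - 1 \<le> real k"
      unfolding k_def by linarith+
    then have k: "\<rho> * real k \<le> y" "y / \<rho> - 1 \<le> real k"
      using \<open>\<rho> > 0\<close> by (auto simp: field_simps)
    have "young_conj \<omega> (\<rho> * real k) \<le> ln b * y - 3/4 * \<omega> b"
      using young_conj_mono[OF w _ k(1)] \<open>\<rho> > 0\<close> y by simp
    then have "(1/\<rho>) * young_conj \<omega> (\<rho> * real k) \<le> ln b * (y / \<rho>) - 3/4 * \<omega> b / \<rho>"
      using \<open>\<rho> > 0\<close> by (simp add: field_simps)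
    also have "\<dots> \<le> ln b * (real k + 1) - 3/4 * \<omega> b / \<rho>"
      using k(2) b by (intro diff_right_mono mult_left_mono) auto
    finally have "3/4 * \<omega> b / \<rho> - ln b + (1/\<rho>) * young_conj \<omega> (\<rho> * real k) \<le> real k * ln b"
      by (simp add: algebra_simps)
    then have "exp (3/4 * \<omega> b / \<rho> - ln b) * weight_omega \<omega> \<rho> k \<le> exp (real k * ln b)"
      unfolding weight_omega_def by (simp flip: exp_add)
    then show ?thesis
      using b by (auto simp: exp_of_nat_mult)
  qed
  then show ?thesis by blast
qed

lemma geom_dominated_omega:
  assumes "weight_fun \<omega>" "\<rho> > 0" "\<And>j. c j \<ge> 0" "\<And>j. b j \<ge> 1"
    and "\<And>j. c j * exp (\<omega> (b j) / \<rho>) \<le> exp (F j)"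
    and "eventually (\<lambda>j. F j + real j * ln 2 \<le> 0) sequentially"
  shows "geom_dominated c b (weight_omega \<omega> \<rho>)"
  by (rule geom_dominatedI[OF assms(3) _ _ assms(5,6)])
     (use assms pow_le_exp_mult_weight_omega in \<open>auto simp: weight_omega_def\<close>)

lemma dominated_omegaD:
  assumes "dominated c b (weight_omega \<omega> \<rho>)" "weight_fun \<omega>" "\<rho> > 0" "\<And>j. c j \<ge> 0"
  shows "\<exists>C B. \<forall>j. b j \<ge> B \<longrightarrow> c j * exp (3/4 * \<omega> (b j) / \<rho> - ln (b j)) \<le> C"
proof -
  obtain B where B: "\<And>x. x \<ge> B \<Longrightarrow> \<exists>k. exp (3/4 * \<omega> x / \<rho> - ln x) * weight_omega \<omega> \<rho> k \<le> x ^ k"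
    using exists_weight_omega_le_pow[OF assms(2,3)] by blast
  define L where "L j = (if b j \<ge> B then exp (3/4 * \<omega> (b j) / \<rho> - ln (b j)) else 0)" for j
  have "\<exists>k. L j * weight_omega \<omega> \<rho> k \<le> b j ^ k" for j
    using B[of "b j"] by (cases "b j \<ge> B") (auto simp: L_def intro: exI[of _ 0])
  then obtain C where "\<forall>j. c j * L j \<le> C"
    using dominatedD[OF assms(1) _ assms(4), where L = L] by (auto simp: weight_omega_def)
  then show ?thesis
    unfolding L_def by (metis mult_zero_right)
qed

definition exp_sq :: "nat \<Rightarrow> real" where
  "exp_sq j = exp (real j ^ 2)"

lemma exp_sq_ge_1: "exp_sq j \<ge> 1"
  unfolding exp_sq_def by simp

lemma exp_sq_ge: "exp_sq j \<ge> real j"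
proof -
  have "real j \<le> 1 + real j ^ 2"
    using zero_le_power2[of "real j - 1"] unfolding power2_diff by simp
  also have "\<dots> \<le> exp_sq j"
    unfolding exp_sq_def by (rule exp_ge_add_one_self)
  finally show ?thesis .
qed

definition exp_sq_poly :: "nat \<Rightarrow> real" where
  "exp_sq_poly j = (real j + 1)^2 * exp_sq j"

lemma exp_sq_poly_ge_1: "exp_sq_poly j \<ge> 1"
  unfolding exp_sq_poly_def using mult_mono[of 1 "(real j + 1)^2" 1 "exp_sq j"] exp_sq_ge_1[of j] by simp

lemma lacunary_exp_neg_exp_in_EG:
  defines "c \<equiv> \<lambda>j. exp (- exp (real j ^ 2 - real j))"
  shows "admissible c exp_sq" "lacunary c exp_sq \<in> EG_beurling" "lacunary c exp_sq \<in> EG_roumieu"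
proof -
  have geom: "geom_dominated c exp_sq (weight_gevrey (s, \<rho>))" if "s > 0" "\<rho> > 0" for s \<rho>
  proof (rule geom_dominated_gevrey[OF that])
    have "eventually (\<lambda>x. - exp (x\<^sup>2 - x) + (1+s) * (exp (x\<^sup>2) / \<rho>) powr (1/(1+s)) + x * ln 2 \<le> 0) at_top"
      using that by real_asymp
    then show "eventually (\<lambda>j. - exp (real j ^ 2 - real j) + (1+s) * (exp_sq j / \<rho>) powr (1/(1+s))
        + real j * ln 2 \<le> 0) sequentially"
      unfolding exp_sq_def by (rule eventually_sequentially_real)
  qed (auto simp: c_def exp_sq_def exp_add[symmetric] less_imp_le)
  show "admissible c exp_sq"
    using geom[of 1 1] by (intro admissibleI_geom_dominated) (auto simp: c_def exp_sq_def)
  with geom show "lacunary c exp_sq \<in> EG_beurling" "lacunary c exp_sq \<in> EG_roumieu"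
    by (auto intro: lacunary_in_EG_beurling lacunary_in_EG_roumieu[of _ _ 1 1])
qed

lemma lacunary_exp_neg_powr_in_EG_roumieu:
  assumes "\<alpha> > 0"
  defines "c \<equiv> \<lambda>j. exp (- (exp_sq_poly j powr \<alpha>))"
  shows "admissible c exp_sq_poly" "lacunary c exp_sq_poly \<in> EG_roumieu"
proof -
  define s where "s = 2 / \<alpha>"
  have "s > 0" "1 / (1+s) < \<alpha>"
    using assms by (auto simp: s_def field_simps add_pos_pos)
  have geom: "geom_dominated c exp_sq_poly (weight_gevrey (s, 1))"
  proof (rule geom_dominated_gevrey[OF \<open>s > 0\<close>])
    \<comment> \<open>\<open>real_asymp\<close> cannot decide the sign of \<open>\<alpha> - 1/(1+s)\<close>, so the exponent is abstracted\<close>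
    have "eventually (\<lambda>x. - (((x+1)\<^sup>2 * exp (x\<^sup>2)) powr \<alpha>)
        + K * ((x+1)\<^sup>2 * exp (x\<^sup>2)) powr \<beta> + x * ln 2 \<le> 0) at_top"
      if "0 < \<beta>" "\<beta> < \<alpha>" for \<beta> K :: real
      using that by real_asymp
    from this[of "1/(1+s)" "1+s"] \<open>s > 0\<close> \<open>1 / (1+s) < \<alpha>\<close>
    show "eventually (\<lambda>j. - (exp_sq_poly j powr \<alpha>) + (1+s) * exp_sq_poly j powr (1/(1+s))
        + real j * ln 2 \<le> 0) sequentially"
      unfolding exp_sq_poly_def exp_sq_def by (auto intro: eventually_sequentially_real)
  qed (use exp_sq_poly_ge_1 order_trans[OF zero_le_one exp_sq_poly_ge_1] in \<open>auto simp: c_def exp_add[symmetric]\<close>)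
  show "admissible c exp_sq_poly"
    using geom order_trans[OF zero_le_one exp_sq_poly_ge_1]
    by (intro admissibleI_geom_dominated) (auto simp: c_def)
  with geom \<open>s > 0\<close> show "lacunary c exp_sq_poly \<in> EG_roumieu"
    by (intro lacunary_in_EG_roumieu) auto
qed

section \<open>Gevrey classes versus classes of weight sequences\<close>

text \<open>The exponential of the associated function of the sequence \<open>k! * M k\<close>.\<close>

definition assoc_fun :: "(nat \<Rightarrow> real) \<Rightarrow> real \<Rightarrow> real" where
  "assoc_fun M x = (SUP k. x ^ k / (fact k * M k))"

lemma pow_div_weight_M: "\<rho> > 0 \<Longrightarrow> b ^ k / weight_M M \<rho> k = (b / \<rho>) ^ k / (fact k * M k)"
  unfolding weight_M_def by (simp add: power_divide field_simps)

lemma bdd_above_assoc_fun_if_dominated: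
  assumes "dominated c b (weight_M M \<rho>)" "\<And>k. M k > 0" "\<rho> > 0" "c j > 0" "0 \<le> x" "x * \<rho> \<le> b j"
  shows "bdd_above (range (\<lambda>k. x ^ k / (fact k * M k)))"
proof -
  obtain C where C: "\<And>k. c j * b j ^ k \<le> C * weight_M M \<rho> k"
    using assms(1) unfolding dominated_def by blast
  have "x ^ k / (fact k * M k) \<le> C / c j" for k
  proof -
    have "x ^ k / (fact k * M k) \<le> (b j / \<rho>) ^ k / (fact k * M k)"
      using assms by (intro divide_right_mono power_mono) (auto simp: pos_le_divide_eq less_imp_le)
    also have "\<dots> = b j ^ k / weight_M M \<rho> k"
      using pow_div_weight_M[OF assms(3)] by simp
    also have "\<dots> \<le> C / c j"
      using C[of k] assms(4) weight_M_pos[of M \<rho> k, OF assms(2,3)] by (simp add: field_simps)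
    finally show ?thesis .
  qed
  then show ?thesis
    by (intro bdd_aboveI2)
qed

locale finite_assoc_fun =
  fixes M :: "nat \<Rightarrow> real"
  assumes M_pos: "\<And>k. M k > 0"
    and bdd_above_assoc: "\<And>x. x \<ge> 0 \<Longrightarrow> bdd_above (range (\<lambda>k. x ^ k / (fact k * M k)))"
begin

lemma le_assoc_fun: "x \<ge> 0 \<Longrightarrow> x ^ k / (fact k * M k) \<le> assoc_fun M x"
  unfolding assoc_fun_def by (rule cSUP_upper[OF UNIV_I bdd_above_assoc])

lemma assoc_fun_le: "(\<And>k. x ^ k / (fact k * M k) \<le> D) \<Longrightarrow> assoc_fun M x \<le> D"
  unfolding assoc_fun_def by (rule cSUP_least) auto

lemma assoc_fun_pos: "x \<ge> 0 \<Longrightarrow> assoc_fun M x > 0"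
  using le_assoc_fun[of x 0] M_pos[of 0] by (metis divide_pos_pos less_le_trans fact_gt_zero
      mult_pos_pos power_0 zero_less_one)

lemma assoc_fun_mono: "0 \<le> x \<Longrightarrow> x \<le> y \<Longrightarrow> assoc_fun M x \<le> assoc_fun M y"
  by (rule assoc_fun_le, rule order.trans[OF _ le_assoc_fun])
     (auto intro!: divide_right_mono power_mono simp: M_pos less_imp_le)

lemma assoc_fun_bounded_if_dominated:
  assumes "dominated c b (weight_M M \<rho>)" "\<rho> > 0" "\<And>j. c j > 0"
  shows "\<exists>C. \<forall>j. c j * assoc_fun M (b j / \<rho>) \<le> C"
proof -
  obtain C where C: "\<And>j k. c j * b j ^ k \<le> C * weight_M M \<rho> k"
    using assms(1) unfolding dominated_def by blast
  have "assoc_fun M (b j / \<rho>) \<le> C / c j" for j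
  proof (rule assoc_fun_le)
    fix k
    have "(b j / \<rho>) ^ k / (fact k * M k) = b j ^ k / weight_M M \<rho> k"
      using pow_div_weight_M[OF assms(2)] by simp
    also have "\<dots> \<le> C / c j"
      using C[of j k] assms(3)[of j] weight_M_pos[of M \<rho> k, OF M_pos assms(2)]
      by (simp add: field_simps mult.commute)
    finally show "(b j / \<rho>) ^ k / (fact k * M k) \<le> C / c j" .
  qed
  then show ?thesis
    using assms(3) by (metis mult.commute pos_le_divide_eq)
qed

definition coeff_M :: "nat \<Rightarrow> real" where
  "coeff_M j = (1/2)^j / assoc_fun M ((real j + 1) * exp_sq j)"

lemma assoc_fun_at_exp_sq_pos: "assoc_fun M ((real j + 1) * exp_sq j) > 0"
  using exp_sq_ge_1[of j] by (intro assoc_fun_pos) simp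

lemma geom_dominated_coeff_M:
  assumes "\<rho> > 0"
  shows "geom_dominated coeff_M exp_sq (weight_M M \<rho>)"
proof -
  define R where "R j = assoc_fun M (exp_sq j / \<rho>) / assoc_fun M ((real j + 1) * exp_sq j)" for j
  have "eventually (\<lambda>j. R j \<le> 1) sequentially"
  proof (rule eventually_sequentiallyI)
    fix j assume "j \<ge> nat \<lceil>1/\<rho>\<rceil>"
    then have "exp_sq j * (1/\<rho>) \<le> exp_sq j * (real j + 1)"
      using exp_sq_ge_1[of j] by (intro mult_left_mono) linarith+
    then have "assoc_fun M (exp_sq j / \<rho>) \<le> assoc_fun M ((real j + 1) * exp_sq j)"
      using assms exp_sq_ge_1[of j] by (intro assoc_fun_mono) (auto simp: mult.commute)
    then show "R j \<le> 1"
      unfolding R_def using assoc_fun_at_exp_sq_pos[of j] by simp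
  qed
  then obtain C where C: "\<And>j. R j \<le> C"
    using bounded_if_eventually_bounded by blast
  have "coeff_M j * exp_sq j ^ k \<le> C * (1/2)^j * weight_M M \<rho> k" for j k
  proof -
    have "coeff_M j * exp_sq j ^ k
        = (1/2)^j * weight_M M \<rho> k * ((exp_sq j / \<rho>) ^ k / (fact k * M k)
          / assoc_fun M ((real j + 1) * exp_sq j))"
      using assms M_pos[of k] by (simp add: coeff_M_def weight_M_def power_divide field_simps)
    also have "\<dots> \<le> (1/2)^j * weight_M M \<rho> k * R j"
      unfolding R_def using assms exp_sq_ge_1[of j] assoc_fun_at_exp_sq_pos[of j]
        weight_M_pos[of M \<rho> k, OF M_pos assms]
      by (intro mult_left_mono divide_right_mono le_assoc_fun) auto
    also have "\<dots> \<le> C * (1/2)^j * weight_M M \<rho> k"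
      using C[of j] weight_M_pos[of M \<rho> k, OF M_pos assms] by (simp add: mult_left_mono)
    finally show ?thesis .
  qed
  then show ?thesis
    unfolding geom_dominated_def by blast
qed

lemma coeff_M_pos: "coeff_M j > 0"
  unfolding coeff_M_def using assoc_fun_at_exp_sq_pos[of j] by simp

lemma admissible_coeff_M: "admissible coeff_M exp_sq"
  using geom_dominated_coeff_M[of 1] coeff_M_pos exp_sq_ge_1
  by (intro admissibleI_geom_dominated) (auto intro: less_imp_le order_trans[OF zero_le_one])

lemma lacunary_coeff_M_in_E_beurling: "lacunary coeff_M exp_sq \<in> E_beurling M"
  using admissible_coeff_M M_pos geom_dominated_coeff_M by (rule lacunary_in_E_beurling)

lemma inv_assoc_fun_le_if_dominated_gevrey:
  assumes "dominated coeff_M exp_sq (weight_gevrey (s, \<rho>))" "s > 0" "\<rho> > 0"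
  shows "\<exists>C. \<forall>j. 1 / assoc_fun M ((real j + 1) * exp_sq j)
    \<le> exp (C + real j * ln 2 - ((exp_sq j / \<rho>) powr (1/(1+s)) / 2 - 1) * ln 2)"
proof -
  define Y where "Y j = (exp_sq j / \<rho>) powr (1/(1+s)) / 2 - 1" for j
  obtain C where C: "\<And>j. coeff_M j * 2 powr Y j \<le> C"
    using dominated_gevreyD[OF assms] coeff_M_pos exp_sq_ge_1 unfolding Y_def
    by (metis less_imp_le less_le_trans zero_less_one)
  have "0 < coeff_M 0 * 2 powr Y 0"
    using coeff_M_pos[of 0] by simp
  then have "C > 0"
    using C[of 0] by linarith
  have "1 / assoc_fun M ((real j + 1) * exp_sq j) = coeff_M j * 2 powr Y j * (2 ^ j / 2 powr Y j)" for j
    unfolding coeff_M_def using assoc_fun_at_exp_sq_pos[of j] by (simp add: field_simps power_one_over)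
  also have "\<dots> j \<le> C * (2 ^ j / 2 powr Y j)" for j
    using C[of j] by (intro mult_right_mono) auto
  also have "\<dots> j = exp (ln C + real j * ln 2 - Y j * ln 2)" for j
    using \<open>C > 0\<close> by (simp add: exp_add exp_diff exp_of_nat_mult powr_def)
  finally show ?thesis
    unfolding Y_def by blast
qed

definition coeff_M_exp :: "nat \<Rightarrow> real" where
  "coeff_M_exp j = exp (real j) / assoc_fun M ((real j + 1) * exp_sq j)"

lemma coeff_M_exp_pos: "coeff_M_exp j > 0"
  unfolding coeff_M_exp_def using assoc_fun_at_exp_sq_pos[of j] by simp

text \<open>
  If \<open>coeff_M\<close> passes the Gevrey test at every level, then \<open>assoc_fun M\<close> grows faster than
  any \<open>exp (x powr \<sigma>)\<close> with \<open>\<sigma> < 1\<close>, which leaves room to multiply the coefficients by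
  \<open>exp j\<close> and the frequencies by \<open>(j + 1)^2\<close>.
\<close>
lemma coeff_M_exp_in_EG_beurling:
  assumes "lacunary coeff_M exp_sq \<in> EG_beurling"
  shows "admissible coeff_M_exp exp_sq_poly" "lacunary coeff_M_exp exp_sq_poly \<in> EG_beurling"
proof -
  have geom: "geom_dominated coeff_M_exp exp_sq_poly (weight_gevrey (s, \<rho>))" if sr: "s > 0" "\<rho> > 0" for s \<rho>
  proof -
    define \<sigma> \<sigma>' where "\<sigma> = 1/(1+s)" and "\<sigma>' = 1/(1+s/2)"
    have \<sigma>: "0 < \<sigma>" "\<sigma> < \<sigma>'"
      using sr by (auto simp: \<sigma>_def \<sigma>'_def field_simps)
    obtain C where C: "\<And>j. 1 / assoc_fun M ((real j + 1) * exp_sq j)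
        \<le> exp (C + real j * ln 2 - (exp_sq j powr \<sigma>' / 2 - 1) * ln 2)"
      using inv_assoc_fun_le_if_dominated_gevrey
        [OF dominated_if_lacunary_in_EG_beurling[OF admissible_coeff_M assms, of "s/2" 1]] sr
      by (auto simp: \<sigma>'_def)
    define F where "F x = x + (C + x * ln 2 - (exp (x\<^sup>2) powr \<sigma>' / 2 - 1) * ln 2)
      + (1+s) * ((x+1)\<^sup>2 * exp (x\<^sup>2) / \<rho>) powr \<sigma>" for x :: real
    show ?thesis
    proof (rule geom_dominated_gevrey[where F = "\<lambda>j. F (real j)", OF sr])
      have "eventually (\<lambda>x. F x + x * ln 2 \<le> 0) at_top"
        unfolding F_def using \<sigma> \<open>\<rho> > 0\<close> by real_asymp
      then show "eventually (\<lambda>j. F (real j) + real j * ln 2 \<le> 0) sequentially"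
        by (rule eventually_sequentially_real)
      fix j
      have "coeff_M_exp j * exp ((1+s) * (exp_sq_poly j / \<rho>) powr (1/(1+s)))
          = exp (real j) * (1 / assoc_fun M ((real j + 1) * exp_sq j)) * exp ((1+s) * (exp_sq_poly j / \<rho>) powr \<sigma>)"
        by (simp add: coeff_M_exp_def \<sigma>_def)
      also have "\<dots> \<le> exp (real j) * exp (C + real j * ln 2 - (exp_sq j powr \<sigma>' / 2 - 1) * ln 2)
          * exp ((1+s) * (exp_sq_poly j / \<rho>) powr \<sigma>)"
        using C[of j] by (intro mult_right_mono mult_left_mono) auto
      also have "\<dots> = exp (F (real j))"
        by (simp add: F_def exp_sq_def exp_sq_poly_def flip: exp_add)
      finally show "coeff_M_exp j * exp ((1+s) * (exp_sq_poly j / \<rho>) powr (1/(1+s))) \<le> exp (F (real j))" .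
    qed (use coeff_M_exp_pos exp_sq_poly_ge_1 order_trans[OF zero_le_one] in \<open>auto intro: less_imp_le\<close>)
  qed
  show "admissible coeff_M_exp exp_sq_poly"
    using geom[of 1 1] coeff_M_exp_pos order_trans[OF zero_le_one exp_sq_poly_ge_1]
    by (intro admissibleI_geom_dominated) (auto intro: less_imp_le)
  then show "lacunary coeff_M_exp exp_sq_poly \<in> EG_beurling"
    using geom by (rule lacunary_in_EG_beurling)
qed

lemma assoc_fun_le_at_exp_sq_poly:
  assumes "\<rho> > 0" "\<rho> \<le> real j + 1"
  shows "assoc_fun M ((real j + 1) * exp_sq j) \<le> assoc_fun M (exp_sq_poly j / \<rho>)"
proof (rule assoc_fun_mono)
  have "(real j + 1) * exp_sq j * \<rho> \<le> (real j + 1) * exp_sq j * (real j + 1)"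
    using assms exp_sq_ge_1[of j] by (intro mult_left_mono) auto
  then show "(real j + 1) * exp_sq j \<le> exp_sq_poly j / \<rho>"
    using assms by (simp add: exp_sq_poly_def pos_le_divide_eq power2_eq_square mult_ac)
qed (use exp_sq_ge_1[of j] in auto)

lemma coeff_M_exp_not_in_E_roumieu:
  assumes "admissible coeff_M_exp exp_sq_poly"
  shows "lacunary coeff_M_exp exp_sq_poly \<notin> E_roumieu M"
proof
  assume "lacunary coeff_M_exp exp_sq_poly \<in> E_roumieu M"
  then obtain \<rho> where "\<rho> > 0" "dominated coeff_M_exp exp_sq_poly (weight_M M \<rho>)"
    using dominated_if_lacunary_in_E_roumieu[of coeff_M_exp exp_sq_poly M, OF assms M_pos] by blast
  then obtain C where C: "\<And>j. coeff_M_exp j * assoc_fun M (exp_sq_poly j / \<rho>) \<le> C"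
    using assoc_fun_bounded_if_dominated coeff_M_exp_pos by blast
  define j where "j = nat \<lceil>max \<rho> C\<rceil>"
  have j: "\<rho> \<le> real j + 1" "C < real j + 1"
    unfolding j_def by linarith+
  have "exp (real j) = coeff_M_exp j * assoc_fun M ((real j + 1) * exp_sq j)"
    using assoc_fun_at_exp_sq_pos[of j] by (simp add: coeff_M_exp_def)
  also have "\<dots> \<le> coeff_M_exp j * assoc_fun M (exp_sq_poly j / \<rho>)"
    using assoc_fun_le_at_exp_sq_poly[OF \<open>\<rho> > 0\<close> j(1)] coeff_M_exp_pos[of j] by simp
  also have "\<dots> \<le> C"
    by (rule C)
  finally show False
    using exp_ge_add_one_self[of "real j"] j(2) by linarith
qed

lemma EG_beurling_not_subset_E_roumieu:
  assumes "lacunary coeff_M exp_sq \<in> EG_beurling"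
  shows "\<not> EG_beurling \<subseteq> E_roumieu M"
  using coeff_M_exp_in_EG_beurling[OF assms] coeff_M_exp_not_in_E_roumieu by blast

lemma assoc_fun_le_if_exp_neg_powr_in_E_roumieu:
  assumes "\<alpha> > 0" "lacunary (\<lambda>j. exp (- (exp_sq_poly j powr \<alpha>))) exp_sq_poly \<in> E_roumieu M"
  shows "\<exists>C \<rho>. \<rho> > 0 \<and> (\<forall>j. \<rho> \<le> real j + 1 \<longrightarrow>
    assoc_fun M ((real j + 1) * exp_sq j) \<le> C * exp (exp_sq_poly j powr \<alpha>))"
proof -
  define c where "c j = exp (- (exp_sq_poly j powr \<alpha>))" for j
  obtain \<rho> where "\<rho> > 0" "dominated c exp_sq_poly (weight_M M \<rho>)"
    using dominated_if_lacunary_in_E_roumieu[of c exp_sq_poly M, OF _ M_pos]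
      lacunary_exp_neg_powr_in_EG_roumieu(1)[OF assms(1)] assms(2) unfolding c_def by blast
  then obtain C where C: "\<And>j. c j * assoc_fun M (exp_sq_poly j / \<rho>) \<le> C"
    using assoc_fun_bounded_if_dominated[of c exp_sq_poly \<rho>] by (auto simp: c_def)
  have "assoc_fun M ((real j + 1) * exp_sq j) \<le> C * exp (exp_sq_poly j powr \<alpha>)" if "\<rho> \<le> real j + 1" for j
    using assoc_fun_le_at_exp_sq_poly[OF \<open>\<rho> > 0\<close> that] C[of j] by (simp add: c_def exp_minus field_simps)
  with \<open>\<rho> > 0\<close> show ?thesis
    by blast
qed

lemma EG_roumieu_not_subset_E_roumieu:
  assumes "lacunary coeff_M exp_sq \<in> EG_roumieu"
  shows "\<not> EG_roumieu \<subseteq> E_roumieu M"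
proof
  assume sub: "EG_roumieu \<subseteq> E_roumieu M"
  obtain s \<rho> where "s > 0" "\<rho> > 0" and dom: "dominated coeff_M exp_sq (weight_gevrey (s, \<rho>))"
    using dominated_if_lacunary_in_EG_roumieu[OF admissible_coeff_M assms] by blast
  define \<sigma> where "\<sigma> = 1/(1+s)"
  have "\<sigma> > 0"
    using \<open>s > 0\<close> by (simp add: \<sigma>_def)
  obtain C1 where C1: "\<And>j. 1 / assoc_fun M ((real j + 1) * exp_sq j)
      \<le> exp (C1 + real j * ln 2 - ((exp_sq j / \<rho>) powr \<sigma> / 2 - 1) * ln 2)"
    using inv_assoc_fun_le_if_dominated_gevrey[OF dom \<open>s > 0\<close> \<open>\<rho> > 0\<close>] unfolding \<sigma>_def by blast
  have "lacunary (\<lambda>j. exp (- (exp_sq_poly j powr (\<sigma>/2)))) exp_sq_poly \<in> E_roumieu M"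
    using lacunary_exp_neg_powr_in_EG_roumieu(2)[of "\<sigma>/2"] \<open>\<sigma> > 0\<close> sub by auto
  then obtain C2 \<rho>' where "\<rho>' > 0" and C2: "\<And>j. \<rho>' \<le> real j + 1 \<Longrightarrow>
      assoc_fun M ((real j + 1) * exp_sq j) \<le> C2 * exp (exp_sq_poly j powr (\<sigma>/2))"
    using assoc_fun_le_if_exp_neg_powr_in_E_roumieu[of "\<sigma>/2"] \<open>\<sigma> > 0\<close> by auto
  have "eventually (\<lambda>x. \<rho>' \<le> x + 1) at_top"
    "eventually (\<lambda>x. ln C2 + ((x+1)\<^sup>2 * exp (x\<^sup>2)) powr (\<sigma>/2) + C1 + x * ln 2
      - ((exp (x\<^sup>2) / \<rho>) powr \<sigma> / 2 - 1) * ln 2 < 0) at_top"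
    using \<open>\<sigma> > 0\<close> \<open>\<rho> > 0\<close> by real_asymp+
  from eventually_sequentially_real[OF eventually_conj[OF this]]
  obtain j where j: "\<rho>' \<le> real j + 1"
    "ln C2 + exp_sq_poly j powr (\<sigma>/2) + C1 + real j * ln 2 - ((exp_sq j / \<rho>) powr \<sigma> / 2 - 1) * ln 2 < 0"
    unfolding exp_sq_poly_def exp_sq_def eventually_sequentially by auto
  have "0 < C2 * exp (exp_sq_poly j powr (\<sigma>/2))"
    using C2[OF j(1)] assoc_fun_at_exp_sq_pos[of j] by linarith
  then have "C2 > 0"
    by (simp add: zero_less_mult_iff)
  have "assoc_fun M ((real j + 1) * exp_sq j) * (1 / assoc_fun M ((real j + 1) * exp_sq j))
      \<le> C2 * exp (exp_sq_poly j powr (\<sigma>/2))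
        * exp (C1 + real j * ln 2 - ((exp_sq j / \<rho>) powr \<sigma> / 2 - 1) * ln 2)"
    using C1[of j] C2[OF j(1)] assoc_fun_at_exp_sq_pos[of j] by (intro mult_mono) auto
  also have "\<dots> = exp (ln C2 + exp_sq_poly j powr (\<sigma>/2)
      + (C1 + real j * ln 2 - ((exp_sq j / \<rho>) powr \<sigma> / 2 - 1) * ln 2))"
    using \<open>C2 > 0\<close> by (simp add: exp_add)
  also have "\<dots> < 1"
    using j(2) by (simp add: add.assoc)
  finally show False
    using assoc_fun_at_exp_sq_pos[of j] by simp
qed

end

lemma finite_assoc_fun_if_in_E_roumieu:
  assumes "\<And>k. M k > 0" "lacunary (\<lambda>j. exp (- exp (real j ^ 2 - real j))) exp_sq \<in> E_roumieu M"
  shows "finite_assoc_fun M"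
proof
  obtain \<rho> where "\<rho> > 0" and dom: "dominated (\<lambda>j. exp (- exp (real j ^ 2 - real j))) exp_sq (weight_M M \<rho>)"
    using dominated_if_lacunary_in_E_roumieu[of _ _ M, OF lacunary_exp_neg_exp_in_EG(1) assms(1)] assms(2) by blast
  fix x :: real
  assume "x \<ge> 0"
  have "x * \<rho> \<le> exp_sq (nat \<lceil>x * \<rho>\<rceil>)"
    using exp_sq_ge[of "nat \<lceil>x * \<rho>\<rceil>"] by linarith
  with bdd_above_assoc_fun_if_dominated[OF dom assms(1) \<open>\<rho> > 0\<close>] \<open>x \<ge> 0\<close>
  show "bdd_above (range (\<lambda>k. x ^ k / (fact k * M k)))"
    by simp
qed (rule assms(1))

lemma EG_beurling_not_between_E_M:
  assumes "\<And>k. M k > 0"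
  shows "\<not> (E_beurling M \<subseteq> EG_beurling \<and> EG_beurling \<subseteq> E_roumieu M)"
proof
  assume between: "E_beurling M \<subseteq> EG_beurling \<and> EG_beurling \<subseteq> E_roumieu M"
  then interpret finite_assoc_fun M
    using finite_assoc_fun_if_in_E_roumieu[of M, OF assms] lacunary_exp_neg_exp_in_EG(2) by blast
  show False
    using EG_beurling_not_subset_E_roumieu lacunary_coeff_M_in_E_beurling between by blast
qed

lemma EG_roumieu_not_between_E_M:
  assumes "\<And>k. M k > 0"
  shows "\<not> (E_beurling M \<subseteq> EG_roumieu \<and> EG_roumieu \<subseteq> E_roumieu M)"
proof
  assume between: "E_beurling M \<subseteq> EG_roumieu \<and> EG_roumieu \<subseteq> E_roumieu M"
  then interpret finite_assoc_fun M
    using finite_assoc_fun_if_in_E_roumieu[of M, OF assms] lacunary_exp_neg_exp_in_EG(3) by blast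
  show False
    using EG_roumieu_not_subset_E_roumieu lacunary_coeff_M_in_E_beurling between by blast
qed

section \<open>Gevrey classes versus classes of weight functions\<close>

definition coeff_omega :: "(real \<Rightarrow> real) \<Rightarrow> nat \<Rightarrow> real" where
  "coeff_omega \<omega> j = exp (- (real j + 1) * \<omega> (exp_sq j) - real j)"

context
  fixes \<omega> :: "real \<Rightarrow> real"
  assumes w: "weight_fun \<omega>"
begin

lemma omega_exp_sq_nonneg: "\<omega> (exp_sq j) \<ge> 0"
  using weight_fun_nonneg[OF w] exp_sq_ge_1[of j] by simp

lemma geom_dominated_coeff_omega:
  assumes "\<rho> > 0"
  shows "geom_dominated (coeff_omega \<omega>) exp_sq (weight_omega \<omega> \<rho>)"
proof (rule geom_dominated_omega[OF w assms])
  show "eventually (\<lambda>j. (- (real j + 1) * \<omega> (exp_sq j) - real j + \<omega> (exp_sq j) / \<rho>)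
      + real j * ln 2 \<le> 0) sequentially"
  proof (rule eventually_sequentiallyI)
    fix j assume "j \<ge> nat \<lceil>1/\<rho>\<rceil>"
    then have "\<omega> (exp_sq j) * (1/\<rho>) \<le> \<omega> (exp_sq j) * (real j + 1)"
      using omega_exp_sq_nonneg[of j] by (intro mult_left_mono) linarith+
    moreover have "real j * ln 2 \<le> real j"
      using ln_2_less_1 by (simp add: mult_left_le)
    ultimately show "(- (real j + 1) * \<omega> (exp_sq j) - real j + \<omega> (exp_sq j) / \<rho>) + real j * ln 2 \<le> 0"
      by (simp add: algebra_simps)
  qed
qed (auto simp: coeff_omega_def exp_sq_ge_1 simp flip: exp_add)

lemma admissible_coeff_omega: "admissible (coeff_omega \<omega>) exp_sq"
  using geom_dominated_coeff_omega[of 1] exp_sq_ge_1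
  by (intro admissibleI_geom_dominated) (auto simp: coeff_omega_def intro: order_trans[OF zero_le_one])

lemma lacunary_coeff_omega_in_Eomega_beurling: "lacunary (coeff_omega \<omega>) exp_sq \<in> Eomega_beurling \<omega>"
  using admissible_coeff_omega geom_dominated_coeff_omega by (rule lacunary_in_Eomega_beurling)

lemma omega_exp_sq_lower_if_dominated_gevrey:
  assumes "dominated (coeff_omega \<omega>) exp_sq (weight_gevrey (s, \<rho>))" "s > 0" "\<rho> > 0"
  shows "\<exists>C. \<forall>j. ((exp_sq j / \<rho>) powr (1/(1+s)) / 2 - 1) * ln 2 - real j - C \<le> (real j + 1) * \<omega> (exp_sq j)"
proof -
  define Y where "Y j = (exp_sq j / \<rho>) powr (1/(1+s)) / 2 - 1" for j
  obtain C where C: "\<And>j. coeff_omega \<omega> j * 2 powr Y j \<le> C"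
    using dominated_gevreyD[OF assms] exp_sq_ge_1 unfolding Y_def coeff_omega_def
    by (metis exp_ge_zero less_le_trans zero_less_one)
  have "- (real j + 1) * \<omega> (exp_sq j) - real j + Y j * ln 2 \<le> ln C" for j
  proof -
    have "exp (- (real j + 1) * \<omega> (exp_sq j) - real j + Y j * ln 2) = coeff_omega \<omega> j * 2 powr Y j"
      by (simp add: coeff_omega_def powr_def exp_add)
    with C[of j] show ?thesis
      by (simp add: le_ln_if_exp_le)
  qed
  then show ?thesis
    unfolding Y_def by (intro exI[of _ "ln C"]) (auto simp: algebra_simps)
qed

lemma omega_exp_sq_lower_if_in_EG_beurling:
  assumes "lacunary (coeff_omega \<omega>) exp_sq \<in> EG_beurling" "s > 0"
  shows "\<exists>C. \<forall>j. (exp_sq j powr (1/(1+s)) / 2 - 1) * ln 2 - real j - C \<le> (real j + 1) * \<omega> (exp_sq j)"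
  using omega_exp_sq_lower_if_dominated_gevrey
    [OF dominated_if_lacunary_in_EG_beurling[OF admissible_coeff_omega assms(1) assms(2), of 1]] assms(2)
  by simp

lemma exp_neg_omega_in_EG_beurling:
  assumes "lacunary (coeff_omega \<omega>) exp_sq \<in> EG_beurling"
  defines "c \<equiv> \<lambda>j. exp (- (\<omega> (exp_sq j) / (real j + 1)))"
  shows "admissible c exp_sq" "lacunary c exp_sq \<in> EG_beurling"
proof -
  have geom: "geom_dominated c exp_sq (weight_gevrey (s, \<rho>))" if sr: "s > 0" "\<rho> > 0" for s \<rho>
  proof (rule geom_dominated_gevrey[OF sr])
    define \<sigma> \<sigma>' where "\<sigma> = 1/(1+s)" and "\<sigma>' = 1/(1+s/2)"
    have \<sigma>: "0 < \<sigma>" "\<sigma> < \<sigma>'"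
      using sr by (auto simp: \<sigma>_def \<sigma>'_def field_simps)
    obtain C where C: "\<And>j. (exp_sq j powr \<sigma>' / 2 - 1) * ln 2 - real j - C \<le> (real j + 1) * \<omega> (exp_sq j)"
      using omega_exp_sq_lower_if_in_EG_beurling[OF assms(1), of "s/2"] sr by (auto simp: \<sigma>'_def)
    have "eventually (\<lambda>x. (1+s) * (exp (x\<^sup>2) / \<rho>) powr \<sigma> + x * ln 2
        \<le> ((exp (x\<^sup>2) powr \<sigma>' / 2 - 1) * ln 2 - x - C) / (x + 1)\<^sup>2) at_top"
      using \<sigma> sr by real_asymp
    then have "eventually (\<lambda>j. (1+s) * (exp_sq j / \<rho>) powr \<sigma> + real j * ln 2
        \<le> ((exp_sq j powr \<sigma>' / 2 - 1) * ln 2 - real j - C) / (real j + 1)\<^sup>2) sequentially"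
      unfolding exp_sq_def by (rule eventually_sequentially_real)
    then show "eventually (\<lambda>j. (- (\<omega> (exp_sq j) / (real j + 1)) + (1+s) * (exp_sq j / \<rho>) powr (1/(1+s)))
        + real j * ln 2 \<le> 0) sequentially"
    proof (rule eventually_mono)
      fix j
      have "((exp_sq j powr \<sigma>' / 2 - 1) * ln 2 - real j - C) / (real j + 1)\<^sup>2
          \<le> (real j + 1) * \<omega> (exp_sq j) / (real j + 1)\<^sup>2"
        using C[of j] by (intro divide_right_mono) auto
      also have "\<dots> = \<omega> (exp_sq j) / (real j + 1)"
        by (simp add: power2_eq_square)
      finally show "(1+s) * (exp_sq j / \<rho>) powr \<sigma> + real j * ln 2
          \<le> ((exp_sq j powr \<sigma>' / 2 - 1) * ln 2 - real j - C) / (real j + 1)\<^sup>2 \<Longrightarrow>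
        (- (\<omega> (exp_sq j) / (real j + 1)) + (1+s) * (exp_sq j / \<rho>) powr (1/(1+s))) + real j * ln 2 \<le> 0"
        by (simp add: \<sigma>_def)
    qed
  qed (auto simp: c_def exp_sq_ge_1 order_trans[OF zero_le_one exp_sq_ge_1] simp flip: exp_add)
  show "admissible c exp_sq"
    using geom[of 1 1] order_trans[OF zero_le_one exp_sq_ge_1]
    by (intro admissibleI_geom_dominated) (auto simp: c_def)
  then show "lacunary c exp_sq \<in> EG_beurling"
    using geom by (rule lacunary_in_EG_beurling)
qed

lemma exp_neg_omega_not_in_Eomega_roumieu:
  assumes "lacunary (coeff_omega \<omega>) exp_sq \<in> EG_beurling"
  defines "c \<equiv> \<lambda>j. exp (- (\<omega> (exp_sq j) / (real j + 1)))"
  shows "lacunary c exp_sq \<notin> Eomega_roumieu \<omega>"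
proof
  assume "lacunary c exp_sq \<in> Eomega_roumieu \<omega>"
  then obtain \<rho> where "\<rho> > 0" "dominated c exp_sq (weight_omega \<omega> \<rho>)"
    using dominated_if_lacunary_in_Eomega_roumieu exp_neg_omega_in_EG_beurling(1)[OF assms(1)]
    unfolding c_def by blast
  then obtain C B where CB: "\<And>j. exp_sq j \<ge> B \<Longrightarrow> c j * exp (3/4 * \<omega> (exp_sq j) / \<rho> - ln (exp_sq j)) \<le> C"
    using dominated_omegaD[OF _ w] by (metis c_def exp_ge_zero)
  obtain C1 where C1: "\<And>j. (exp_sq j powr (1/2) / 2 - 1) * ln 2 - real j - C1 \<le> (real j + 1) * \<omega> (exp_sq j)"
    using omega_exp_sq_lower_if_in_EG_beurling[OF assms(1), of 1] by auto
  have "eventually (\<lambda>x. B \<le> exp (x\<^sup>2)) at_top" "eventually (\<lambda>x. 2 * \<rho> \<le> x + 1) at_top"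
    "eventually (\<lambda>x. (x + 1) * (4 * \<rho> * (ln C + x\<^sup>2)) < (exp (x\<^sup>2) powr (1/2) / 2 - 1) * ln 2 - x - C1) at_top"
    using \<open>\<rho> > 0\<close> by real_asymp+
  from eventually_sequentially_real[OF eventually_conj[OF this(1) eventually_conj[OF this(2,3)]]]
  obtain j where j: "exp_sq j \<ge> B" "2 * \<rho> \<le> real j + 1"
    "(real j + 1) * (4 * \<rho> * (ln C + real j ^ 2)) < (exp_sq j powr (1/2) / 2 - 1) * ln 2 - real j - C1"
    unfolding exp_sq_def eventually_sequentially by auto
  have "c j * exp (3/4 * \<omega> (exp_sq j) / \<rho> - ln (exp_sq j))
      = exp (- (\<omega> (exp_sq j) / (real j + 1)) + (3/4 * (\<omega> (exp_sq j) / \<rho>) - real j ^ 2))"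
    unfolding c_def exp_add by (simp add: exp_sq_def)
  with CB[OF j(1)] have "- (\<omega> (exp_sq j) / (real j + 1)) + (3/4 * (\<omega> (exp_sq j) / \<rho>) - real j ^ 2) \<le> ln C"
    by (simp add: le_ln_if_exp_le)
  moreover have "\<omega> (exp_sq j) / (real j + 1) \<le> (\<omega> (exp_sq j) / \<rho>) / 2"
    using j(2) omega_exp_sq_nonneg[of j] \<open>\<rho> > 0\<close> by (simp add: divide_left_mono)
  moreover have "A \<le> 4 * (L + t)" if "a \<le> A / 2" "- a + (3/4 * A - t) \<le> L" for a A t L :: real
    using that by argo
  ultimately have "\<omega> (exp_sq j) / \<rho> \<le> 4 * (ln C + real j ^ 2)"
    by blast
  then have "\<omega> (exp_sq j) \<le> 4 * \<rho> * (ln C + real j ^ 2)"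
    using \<open>\<rho> > 0\<close> by (simp add: pos_divide_le_eq mult_ac)
  then have "(real j + 1) * \<omega> (exp_sq j) \<le> (real j + 1) * (4 * \<rho> * (ln C + real j ^ 2))"
    by (intro mult_left_mono) auto
  with C1[of j] j(3) show False
    by linarith
qed

lemma EG_beurling_not_between_Eomega:
  "\<not> (Eomega_beurling \<omega> \<subseteq> EG_beurling \<and> EG_beurling \<subseteq> Eomega_roumieu \<omega>)"
  using lacunary_coeff_omega_in_Eomega_beurling exp_neg_omega_in_EG_beurling(2)
    exp_neg_omega_not_in_Eomega_roumieu by blast

lemma omega_le_if_exp_neg_powr_in_Eomega_roumieu:
  assumes "\<alpha> > 0" "lacunary (\<lambda>j. exp (- (exp_sq_poly j powr \<alpha>))) exp_sq_poly \<in> Eomega_roumieu \<omega>"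
  shows "\<exists>\<rho> C B. \<rho> > 0 \<and> (\<forall>j. exp_sq_poly j \<ge> B \<longrightarrow>
    \<omega> (exp_sq j) \<le> 4/3 * \<rho> * (ln C + exp_sq_poly j powr \<alpha> + ln (exp_sq_poly j)))"
proof -
  define c where "c j = exp (- (exp_sq_poly j powr \<alpha>))" for j
  obtain \<rho> where "\<rho> > 0" "dominated c exp_sq_poly (weight_omega \<omega> \<rho>)"
    using dominated_if_lacunary_in_Eomega_roumieu lacunary_exp_neg_powr_in_EG_roumieu(1)[OF assms(1)]
      assms(2) unfolding c_def by blast
  then obtain C B where CB: "\<And>j. exp_sq_poly j \<ge> B \<Longrightarrow>
      c j * exp (3/4 * \<omega> (exp_sq_poly j) / \<rho> - ln (exp_sq_poly j)) \<le> C"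
    using dominated_omegaD[OF _ w] by (metis c_def exp_ge_zero)
  have "\<omega> (exp_sq j) \<le> 4/3 * \<rho> * (ln C + exp_sq_poly j powr \<alpha> + ln (exp_sq_poly j))"
    if "exp_sq_poly j \<ge> B" for j
  proof -
    have "c j * exp (3/4 * \<omega> (exp_sq_poly j) / \<rho> - ln (exp_sq_poly j))
        = exp (- (exp_sq_poly j powr \<alpha>) + (3/4 * \<omega> (exp_sq_poly j) / \<rho> - ln (exp_sq_poly j)))"
      unfolding c_def exp_add ..
    with CB[OF that] have "- (exp_sq_poly j powr \<alpha>) + (3/4 * \<omega> (exp_sq_poly j) / \<rho> - ln (exp_sq_poly j)) \<le> ln C"
      by (simp add: le_ln_if_exp_le)
    then have "\<omega> (exp_sq_poly j) \<le> 4/3 * \<rho> * (ln C + exp_sq_poly j powr \<alpha> + ln (exp_sq_poly j))"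
      using \<open>\<rho> > 0\<close> by (simp add: field_simps)
    moreover have "\<omega> (exp_sq j) \<le> \<omega> (exp_sq_poly j)"
      using exp_sq_ge_1[of j] by (intro weight_fun_mono[OF w]) (auto simp: exp_sq_poly_def)
    ultimately show ?thesis
      by linarith
  qed
  with \<open>\<rho> > 0\<close> show ?thesis
    by blast
qed

lemma EG_roumieu_not_between_Eomega:
  "\<not> (Eomega_beurling \<omega> \<subseteq> EG_roumieu \<and> EG_roumieu \<subseteq> Eomega_roumieu \<omega>)"
proof
  assume between: "Eomega_beurling \<omega> \<subseteq> EG_roumieu \<and> EG_roumieu \<subseteq> Eomega_roumieu \<omega>"
  then obtain s \<rho> where "s > 0" "\<rho> > 0" and dom: "dominated (coeff_omega \<omega>) exp_sq (weight_gevrey (s, \<rho>))"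
    using dominated_if_lacunary_in_EG_roumieu[OF admissible_coeff_omega]
      lacunary_coeff_omega_in_Eomega_beurling by blast
  define \<sigma> where "\<sigma> = 1/(1+s)"
  have "\<sigma> > 0"
    using \<open>s > 0\<close> by (simp add: \<sigma>_def)
  obtain C1 where C1: "\<And>j. ((exp_sq j / \<rho>) powr \<sigma> / 2 - 1) * ln 2 - real j - C1 \<le> (real j + 1) * \<omega> (exp_sq j)"
    using omega_exp_sq_lower_if_dominated_gevrey[OF dom \<open>s > 0\<close> \<open>\<rho> > 0\<close>] unfolding \<sigma>_def by blast
  have "lacunary (\<lambda>j. exp (- (exp_sq_poly j powr (\<sigma>/2)))) exp_sq_poly \<in> Eomega_roumieu \<omega>"
    using lacunary_exp_neg_powr_in_EG_roumieu(2)[of "\<sigma>/2"] \<open>\<sigma> > 0\<close> between by auto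
  then obtain \<rho>' C B where "\<rho>' > 0" and upper: "\<And>j. exp_sq_poly j \<ge> B \<Longrightarrow>
      \<omega> (exp_sq j) \<le> 4/3 * \<rho>' * (ln C + exp_sq_poly j powr (\<sigma>/2) + ln (exp_sq_poly j))"
    using omega_le_if_exp_neg_powr_in_Eomega_roumieu[of "\<sigma>/2"] \<open>\<sigma> > 0\<close> by auto
  have "eventually (\<lambda>x. B \<le> (x+1)\<^sup>2 * exp (x\<^sup>2)) at_top"
    "eventually (\<lambda>x. (x + 1) * (4/3 * \<rho>' * (ln C + ((x+1)\<^sup>2 * exp (x\<^sup>2)) powr (\<sigma>/2)
        + ln ((x+1)\<^sup>2 * exp (x\<^sup>2)))) < ((exp (x\<^sup>2) / \<rho>) powr \<sigma> / 2 - 1) * ln 2 - x - C1) at_top"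
    using \<open>\<sigma> > 0\<close> \<open>\<rho> > 0\<close> \<open>\<rho>' > 0\<close> by real_asymp+
  from eventually_sequentially_real[OF eventually_conj[OF this]]
  obtain j where j: "exp_sq_poly j \<ge> B"
    "(real j + 1) * (4/3 * \<rho>' * (ln C + exp_sq_poly j powr (\<sigma>/2) + ln (exp_sq_poly j)))
      < ((exp_sq j / \<rho>) powr \<sigma> / 2 - 1) * ln 2 - real j - C1"
    unfolding exp_sq_poly_def exp_sq_def eventually_sequentially by auto
  have "(real j + 1) * \<omega> (exp_sq j)
      \<le> (real j + 1) * (4/3 * \<rho>' * (ln C + exp_sq_poly j powr (\<sigma>/2) + ln (exp_sq_poly j)))"
    using upper[OF j(1)] by (intro mult_left_mono) auto
  with C1[of j] j(2) show False
    by linarith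
qed

end

theorem theorem5p22:
  shows "\<forall>E \<in> {EG_beurling, EG_roumieu}.
           (\<forall>M::nat \<Rightarrow> real. (\<forall>k. M k > 0) \<longrightarrow>
               E \<noteq> E_beurling M \<and> E \<noteq> E_roumieu M) \<and>
           (\<forall>\<omega>. weight_fun \<omega> \<longrightarrow>
               E \<noteq> Eomega_beurling \<omega> \<and> E \<noteq> Eomega_roumieu \<omega>)"
proof (intro ballI conjI allI impI)
  fix E and M :: "nat \<Rightarrow> real"
  assume "E \<in> {EG_beurling, EG_roumieu}" "\<forall>k. M k > 0"
  then have "\<not> (E_beurling M \<subseteq> E \<and> E \<subseteq> E_roumieu M)"
    using EG_beurling_not_between_E_M EG_roumieu_not_between_E_M by blast
  then show "E \<noteq> E_beurling M" "E \<noteq> E_roumieu M"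
    using E_beurling_subset_E_roumieu by auto
next
  fix E and \<omega> :: "real \<Rightarrow> real"
  assume "E \<in> {EG_beurling, EG_roumieu}" "weight_fun \<omega>"
  then have "\<not> (Eomega_beurling \<omega> \<subseteq> E \<and> E \<subseteq> Eomega_roumieu \<omega>)"
    using EG_beurling_not_between_Eomega EG_roumieu_not_between_Eomega by blast
  then show "E \<noteq> Eomega_beurling \<omega>" "E \<noteq> Eomega_roumieu \<omega>"
    using Eomega_beurling_subset_Eomega_roumieu by auto
qed

end
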